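(* The set $\mathcal{B}$ of monomials \[ \prod_{a=1}^n \psi_a^{p_a}(\psi_a^* )^{d_a}\omega_a^{v_a}\qquad(\text{factors taken in the order } a=1,2,\dots,n), \] where $p_a,d_a\in\{0,1\}$ and $v_a\in\{0,1,\dots,2k-1\}$ for each $a$, is a $\mathbb{k}$-basis of $\mathrm{Cl}_q(n,k)$.
   Context: Let $\mathbb{k}$ be a field of characteristic different from $2$, let $q\in\mathbb{k}^\times$, and let $n,k$ be positive integers. The quantum Clifford algebra $\mathrm{Cl}_q(n,k)$ is the unital associative $\mathbb{k}$-algebra generated by $\psi_a,\psi_a^*,\omega_a,\omega_a^{-1}$ for $a\in\{1,\dots,n\}$, subject to the relations (for all $a,b\in\{1,\dots,n\}$): $\omega_a\omega_b=\omega_b\omega_a$; $\omega_a\omega_a^{-1}=1$; $\omega_a\psi_b=q^{\delta_{ab}}\psi_b\omega_a$; $\omega_a\psi_b^*=q^{-\delta_{ab}}\psi_b^*\omega_a$; $\psi_a\psi_b+\psi_b\psi_a=0$; $\psi_a^*\psi_b^*+\psi_b^*\psi_a^*=0$; $\psi_a\psi_a^*+q^k\psi_a^*\psi_a=\omega_a^{-k}$; $\psi_a\psi_a^*+q^{-k}\psi_a^*\psi_a=\omega_a^{k}$; and $\psi_a\psi_b^*+\psi_b^*\psi_a=0$ if $a\neq b$. *)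

theory Defs
  imports Main
begin

text \<open>Elements of the free algebra over the field 'k on an alphabet of letters
are functions from words (lists of letters) to 'k with finite support.
The operations below are defined for all functions; multiplication is
concatenation-convolution, which is a finite sum for every word.\<close>

definition fa_mono :: "'g list \<Rightarrow> 'g list \<Rightarrow> 'k::field" where
  "fa_mono w = (\<lambda>u. if u = w then 1 else 0)"

definition fa_one :: "'g list \<Rightarrow> 'k::field" where
  "fa_one = fa_mono []"

definition fa_add :: "('g list \<Rightarrow> 'k::field) \<Rightarrow> ('g list \<Rightarrow> 'k) \<Rightarrow> 'g list \<Rightarrow> 'k" where
  "fa_add f g = (\<lambda>u. f u + g u)"

definition fa_sub :: "('g list \<Rightarrow> 'k::field) \<Rightarrow> ('g list \<Rightarrow> 'k) \<Rightarrow> 'g list \<Rightarrow> 'k" where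
  "fa_sub f g = (\<lambda>u. f u - g u)"

definition fa_smult :: "'k::field \<Rightarrow> ('g list \<Rightarrow> 'k) \<Rightarrow> 'g list \<Rightarrow> 'k" where
  "fa_smult c f = (\<lambda>u. c * f u)"

definition fa_mult :: "('g list \<Rightarrow> 'k::field) \<Rightarrow> ('g list \<Rightarrow> 'k) \<Rightarrow> 'g list \<Rightarrow> 'k" where
  "fa_mult f g = (\<lambda>u. \<Sum>(x, y) \<in> {(x, y). x @ y = u}. f x * g y)"

fun fa_pow :: "('g list \<Rightarrow> 'k::field) \<Rightarrow> nat \<Rightarrow> 'g list \<Rightarrow> 'k" where
  "fa_pow f 0 = fa_one"
| "fa_pow f (Suc m) = fa_mult f (fa_pow f m)"

definition free_alg :: "'g set \<Rightarrow> ('g list \<Rightarrow> 'k::field) set" where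
  "free_alg L = {f. finite {w. f w \<noteq> 0} \<and> (\<forall>w. f w \<noteq> 0 \<longrightarrow> set w \<subseteq> L)}"

inductive_set two_sided_ideal :: "'g set \<Rightarrow> ('g list \<Rightarrow> 'k::field) set \<Rightarrow> ('g list \<Rightarrow> 'k) set"
  for L :: "'g set" and R :: "('g list \<Rightarrow> 'k) set" where
  gen: "r \<in> R \<Longrightarrow> r \<in> two_sided_ideal L R"
| zero: "(\<lambda>_. 0) \<in> two_sided_ideal L R"
| add: "f \<in> two_sided_ideal L R \<Longrightarrow> g \<in> two_sided_ideal L R \<Longrightarrow> fa_add f g \<in> two_sided_ideal L R"
| smult: "f \<in> two_sided_ideal L R \<Longrightarrow> fa_smult c f \<in> two_sided_ideal L R"
| mult: "f \<in> two_sided_ideal L R \<Longrightarrow> set u \<subseteq> L \<Longrightarrow> set w \<subseteq> L \<Longrightarrow>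
         fa_mult (fa_mult (fa_mono u) f) (fa_mono w) \<in> two_sided_ideal L R"

datatype cgen = Psi nat | PsiS nat | Om nat | OmInv nat

definition cl_letters :: "nat \<Rightarrow> cgen set" where
  "cl_letters n = (\<Union>a\<in>{1..n}. {Psi a, PsiS a, Om a, OmInv a})"

definition g :: "cgen \<Rightarrow> cgen list \<Rightarrow> 'k::field" where
  "g x = fa_mono [x]"

text \<open>The relation \<omega>_a^{-1} \<omega>_a = 1 is included since \<omega>_a^{-1}
denotes the inverse of \<omega>_a.\<close>
definition cl_relations :: "nat \<Rightarrow> nat \<Rightarrow> 'k::field \<Rightarrow> (cgen list \<Rightarrow> 'k) set" where
  "cl_relations n k q = (\<Union>a\<in>{1..n}. \<Union>b\<in>{1..n}.
     {fa_sub (fa_mult (g (Om a)) (g (Om b))) (fa_mult (g (Om b)) (g (Om a))),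
      fa_sub (fa_mult (g (Om a)) (g (OmInv a))) fa_one,
      fa_sub (fa_mult (g (OmInv a)) (g (Om a))) fa_one,
      fa_sub (fa_mult (g (Om a)) (g (Psi b)))
             (fa_smult (if a = b then q else 1) (fa_mult (g (Psi b)) (g (Om a)))),
      fa_sub (fa_mult (g (Om a)) (g (PsiS b)))
             (fa_smult (if a = b then inverse q else 1) (fa_mult (g (PsiS b)) (g (Om a)))),
      fa_add (fa_mult (g (Psi a)) (g (Psi b))) (fa_mult (g (Psi b)) (g (Psi a))),
      fa_add (fa_mult (g (PsiS a)) (g (PsiS b))) (fa_mult (g (PsiS b)) (g (PsiS a))),
      fa_sub (fa_add (fa_mult (g (Psi a)) (g (PsiS a)))
                     (fa_smult (q ^ k) (fa_mult (g (PsiS a)) (g (Psi a)))))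
             (fa_pow (g (OmInv a)) k),
      fa_sub (fa_add (fa_mult (g (Psi a)) (g (PsiS a)))
                     (fa_smult (inverse (q ^ k)) (fa_mult (g (PsiS a)) (g (Psi a)))))
             (fa_pow (g (Om a)) k)}
     \<union> (if a \<noteq> b then
          {fa_add (fa_mult (g (Psi a)) (g (PsiS b))) (fa_mult (g (PsiS b)) (g (Psi a)))}
        else {}))"

definition cl_ideal :: "nat \<Rightarrow> nat \<Rightarrow> 'k::field \<Rightarrow> (cgen list \<Rightarrow> 'k) set" where
  "cl_ideal n k q = two_sided_ideal (cl_letters n) (cl_relations n k q)"

definition cl_monomial_word :: "nat \<Rightarrow> (nat \<Rightarrow> nat) \<Rightarrow> (nat \<Rightarrow> nat) \<Rightarrow> (nat \<Rightarrow> nat) \<Rightarrow> cgen list" where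
  "cl_monomial_word n p d v =
     concat (map (\<lambda>a. replicate (p a) (Psi a) @ replicate (d a) (PsiS a) @ replicate (v a) (Om a))
                 [1..<n+1])"

definition cl_basis_words :: "nat \<Rightarrow> nat \<Rightarrow> cgen list set" where
  "cl_basis_words n k = {cl_monomial_word n p d v | p d v.
      \<forall>a\<in>{1..n}. p a \<in> {0, 1} \<and> d a \<in> {0, 1} \<and> v a \<in> {0..<2*k}}"

end

(*
  Spanning: modulo the defining ideal, left multiplication by any generator maps the span
  of the monomials of B into itself. A letter of site a (skew-)commutes past the factors of
  the sites b < a, so only the a-th factor psi^p psi_star^d omega^v changes. There
  psi^2 = psi_star^2 = 0, psi_star psi = q^k (omega^k - psi psi_star), and the identity
  q^(2k) omega^(2k) = 1 + (q^(2k) - 1) psi psi_star omega^k, obtained from the two mixed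
  relations, brings the exponent of omega below 2k. Finally omega^(-1) is itself a
  polynomial in psi, psi_star and omega.

  Independence: the free algebra acts on functions of states, which assign to every site a
  label (two of the four labels odd) and an exponent modulo 2k. Each letter acts on the
  coordinate of its site by a weighted substitution, with a Jordan-Wigner sign for odd
  letters, and every defining relation acts as zero. Applied to a vacuum, the monomials of
  B give product functions that are triangular with respect to the number of sites where
  p or d is nonzero, hence linearly independent.
*)

theory Submission
  imports Defs
begin

section \<open>The free algebra as a ring\<close>

lemma power_double: "(x::'a::monoid_mult) ^ (2 * m) = x ^ m * x ^ m"
  by (simp add: mult_2 power_add)

lemma append_eq_set_image: "{(x, y). x @ y = u} = (\<lambda>i. (take i u, drop i u)) ` {..length u}"
proof (intro set_eqI iffI)
  fix p assume "p \<in> {(x, y). x @ y = u}"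
  then obtain x y where p: "p = (x, y)" "x @ y = u" by auto
  then show "p \<in> (\<lambda>i. (take i u, drop i u)) ` {..length u}"
    by (intro image_eqI[of _ _ "length x"]) auto
qed auto

lemma finite_append_eq: "finite {(x, y). x @ y = (u::'a list)}"
  unfolding append_eq_set_image by simp

lemma fa_mult_assoc: "fa_mult (fa_mult f1 f2) f3 = fa_mult f1 (fa_mult f2 f3)"
proof (rule ext)
  fix u
  have "fa_mult (fa_mult f1 f2) f3 u =
     (\<Sum>p\<in>{(x, y). x @ y = u}. \<Sum>r\<in>{(x, y). x @ y = fst p}. f1 (fst r) * f2 (snd r) * f3 (snd p))"
    unfolding fa_mult_def by (simp add: case_prod_beta sum_distrib_right)
  also have "\<dots> = (\<Sum>(p,r)\<in>Sigma {(x, y). x @ y = u} (\<lambda>p. {(x, y). x @ y = fst p}).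
                     f1 (fst r) * f2 (snd r) * f3 (snd p))"
    by (rule sum.Sigma) (auto intro: finite_append_eq)
  also have "\<dots> = (\<Sum>(p,r)\<in>Sigma {(x, y). x @ y = u} (\<lambda>p. {(x, y). x @ y = snd p}).
                     f1 (fst p) * f2 (fst r) * f3 (snd r))"
    by (rule sum.reindex_bij_witness[where i = "\<lambda>((x,w),(y,z)). ((x@y, z),(x,y))"
                                      and j = "\<lambda>((m,z),(x,y)). ((x, y@z),(y,z))"]) auto
  also have "\<dots> = (\<Sum>p\<in>{(x, y). x @ y = u}. \<Sum>r\<in>{(x, y). x @ y = snd p}.
                     f1 (fst p) * f2 (fst r) * f3 (snd r))"
    by (rule sum.Sigma[symmetric]) (auto intro: finite_append_eq)
  also have "\<dots> = fa_mult f1 (fa_mult f2 f3) u"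
    unfolding fa_mult_def by (simp add: case_prod_beta sum_distrib_left mult.assoc)
  finally show "fa_mult (fa_mult f1 f2) f3 u = fa_mult f1 (fa_mult f2 f3) u" .
qed

lemma fa_mult_conv_take_drop: "fa_mult f1 f2 u = (\<Sum>i\<le>length u. f1 (take i u) * f2 (drop i u))"
proof -
  have "inj_on (\<lambda>i. (take i u, drop i u)) {..length u}"
    by (auto simp: inj_on_def) (metis length_take min.absorb2)
  then show ?thesis unfolding fa_mult_def append_eq_set_image
    by (subst sum.reindex) (auto simp: case_prod_beta)
qed

lemma fa_mult_mono_left:
  "fa_mult (fa_mono w) f u = (if take (length w) u = w then f (drop (length w) u) else 0)"
proof -
  have "fa_mult (fa_mono w) f u =
      (\<Sum>i\<le>length u. if i = length w \<and> take (length w) u = w then f (drop i u) else 0)"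
    unfolding fa_mult_conv_take_drop fa_mono_def
    by (intro sum.cong refl) (auto simp: min_def split: if_splits)
  also have "\<dots> = (if take (length w) u = w then f (drop (length w) u) else 0)"
  proof (cases "take (length w) u = w")
    case True
    then have "length (take (length w) u) = length w" by simp
    then have "length w \<le> length u" by simp
    then show ?thesis using True by (simp add: sum.delta)
  qed simp
  finally show ?thesis .
qed

lemma fa_mult_mono_right:
  "fa_mult f (fa_mono w) u =
     (if length w \<le> length u \<and> drop (length u - length w) u = w
      then f (take (length u - length w) u) else 0)"
proof -
  have "fa_mult f (fa_mono w) u =
      (\<Sum>i\<le>length u. if i = length u - length w \<and> length w \<le> length u \<and>
                         drop (length u - length w) u = w then f (take i u) else 0)"
    unfolding fa_mult_conv_take_drop fa_mono_def by (intro sum.cong refl) auto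
  then show ?thesis by (auto simp: sum.delta)
qed

lemma fa_mono_mult: "fa_mult (fa_mono u) (fa_mono w) = fa_mono (u @ w)"
  by (rule ext) (simp add: fa_mult_mono_left, auto simp: fa_mono_def append_eq_conv_conj,
      metis append_take_drop_id)

lemma fa_mult_distrib_left:
  "fa_mult f1 (\<lambda>u. f2 u + f3 u) = (\<lambda>u. fa_mult f1 f2 u + fa_mult f1 f3 u)"
  by (rule ext) (simp add: fa_mult_conv_take_drop distrib_left sum.distrib)

lemma fa_mult_distrib_right:
  "fa_mult (\<lambda>u. f2 u + f3 u) f1 = (\<lambda>u. fa_mult f2 f1 u + fa_mult f3 f1 u)"
  by (rule ext) (simp add: fa_mult_conv_take_drop distrib_right sum.distrib)

lemma fa_mult_smult_left: "fa_mult (\<lambda>u. c * f1 u) f2 = (\<lambda>u. c * fa_mult f1 f2 u)"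
  by (rule ext) (simp add: fa_mult_conv_take_drop sum_distrib_left mult.assoc)

lemma fa_mult_smult_right: "fa_mult f1 (\<lambda>u. c * f2 u) = (\<lambda>u. c * fa_mult f1 f2 u)"
  by (rule ext) (simp add: fa_mult_conv_take_drop sum_distrib_left mult.left_commute)

text \<open>All coefficient functions, not only the finitely supported ones: the operations
  of the free algebra then live on a type, and \<open>fa_mult\<close> is still a finite sum at
  every word.\<close>
typedef 'k fa = "UNIV :: (cgen list \<Rightarrow> 'k::field) set" by auto

instantiation fa :: (field) ring_1
begin

definition "zero_fa = Abs_fa (\<lambda>_. 0)"
definition "one_fa = Abs_fa fa_one"
definition "plus_fa x y = Abs_fa (fa_add (Rep_fa x) (Rep_fa y))"
definition "minus_fa x y = Abs_fa (fa_sub (Rep_fa x) (Rep_fa y))"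
definition "uminus_fa x = Abs_fa (\<lambda>u. - Rep_fa x u)"
definition "times_fa x y = Abs_fa (fa_mult (Rep_fa x) (Rep_fa y))"

lemma Rep_fa_ops:
  "Rep_fa 0 = (\<lambda>_. 0)" "Rep_fa 1 = fa_one"
  "Rep_fa (x + y) = (\<lambda>u. Rep_fa x u + Rep_fa y u)"
  "Rep_fa (x - y) = (\<lambda>u. Rep_fa x u - Rep_fa y u)"
  "Rep_fa (- x) = (\<lambda>u. - Rep_fa x u)"
  "Rep_fa (x * y) = fa_mult (Rep_fa x) (Rep_fa y)"
  by (simp_all add: zero_fa_def one_fa_def plus_fa_def minus_fa_def uminus_fa_def times_fa_def
      Abs_fa_inverse fa_add_def fa_sub_def)

lemma fa_eqI: "(\<And>u. Rep_fa x u = Rep_fa y u) \<Longrightarrow> x = y"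
  by (metis Rep_fa_inject ext)

instance
proof
  fix a b c :: "'a fa"
  show "a * b * c = a * (b * c)" by (rule fa_eqI) (simp add: Rep_fa_ops fa_mult_assoc)
  show "1 * a = a" by (rule fa_eqI) (simp add: Rep_fa_ops fa_one_def fa_mult_mono_left)
  show "a * 1 = a" by (rule fa_eqI) (simp add: Rep_fa_ops fa_one_def fa_mult_mono_right)
  show "(a + b) * c = a * c + b * c" by (rule fa_eqI) (simp add: Rep_fa_ops fa_mult_distrib_right)
  show "a * (b + c) = a * b + a * c" by (rule fa_eqI) (simp add: Rep_fa_ops fa_mult_distrib_left)
  show "a + b + c = a + (b + c)" by (rule fa_eqI) (simp add: Rep_fa_ops)
  show "a + b = b + a" by (rule fa_eqI) (simp add: Rep_fa_ops)
  show "0 + a = a" by (rule fa_eqI) (simp add: Rep_fa_ops)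
  show "- a + a = 0" by (rule fa_eqI) (simp add: Rep_fa_ops)
  show "a - b = a + - b" by (rule fa_eqI) (simp add: Rep_fa_ops)
  have "Rep_fa (0::'a fa) [] \<noteq> Rep_fa 1 []" by (simp add: Rep_fa_ops fa_one_def fa_mono_def)
  then show "(0::'a fa) \<noteq> 1" by metis
qed

end

definition mon :: "cgen list \<Rightarrow> 'k::field fa" where
  "mon w = Abs_fa (fa_mono w)"

definition smul :: "'k::field \<Rightarrow> 'k fa \<Rightarrow> 'k fa" where
  "smul c x = Abs_fa (fa_smult c (Rep_fa x))"

lemma Rep_fa_mon: "Rep_fa (mon w) = fa_mono w"
  by (simp add: mon_def Abs_fa_inverse)

lemma Rep_fa_smul: "Rep_fa (smul c x) = (\<lambda>u. c * Rep_fa x u)"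
  by (simp add: smul_def Abs_fa_inverse fa_smult_def)

lemma Rep_fa_sum: "Rep_fa (\<Sum>i\<in>A. f i) = (\<lambda>u. \<Sum>i\<in>A. Rep_fa (f i) u)"
  by (induction A rule: infinite_finite_induct) (simp_all add: Rep_fa_ops)

lemma Abs_fa_ops:
  "Abs_fa (fa_mult f1 f2) = Abs_fa f1 * Abs_fa f2"
  "Abs_fa (fa_add f1 f2) = Abs_fa f1 + Abs_fa f2"
  "Abs_fa (fa_sub f1 f2) = Abs_fa f1 - Abs_fa f2"
  "Abs_fa (fa_smult c f1) = smul c (Abs_fa f1)"
  "Abs_fa fa_one = 1"
  "Abs_fa (g x) = mon [x]"
  by (simp_all add: times_fa_def plus_fa_def minus_fa_def one_fa_def smul_def mon_def g_def
      Abs_fa_inverse fa_add_def fa_sub_def)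

lemma Abs_fa_pow: "Abs_fa (fa_pow f m) = Abs_fa f ^ m"
  by (induction m) (simp_all add: Abs_fa_ops)

lemma mon_append: "mon (u @ w) = mon u * mon w"
  by (simp add: mon_def times_fa_def Abs_fa_inverse fa_mono_mult)

lemma mon_Nil: "mon [] = 1"
  by (simp add: mon_def one_fa_def fa_one_def)

lemma mon_Cons: "mon (x # w) = mon [x] * mon w"
  using mon_append[of "[x]" w] by simp

lemma mon_replicate: "mon (replicate m x) = mon [x] ^ m"
  by (induction m) (simp_all add: mon_Nil, metis mon_Cons)

lemma smul_mult_left [simp]: "smul c x * y = smul c (x * y)"
  by (rule fa_eqI) (simp add: Rep_fa_ops Rep_fa_smul fa_mult_smult_left)

lemma smul_mult_right [simp]: "x * smul c y = smul c (x * y)"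
  by (rule fa_eqI) (simp add: Rep_fa_ops Rep_fa_smul fa_mult_smult_right)

lemma smul_smul [simp]: "smul c (smul d x) = smul (c * d) x"
  by (rule fa_eqI) (simp add: Rep_fa_smul mult.assoc)

lemma smul_one [simp]: "smul 1 x = x"
  by (rule fa_eqI) (simp add: Rep_fa_smul)

lemma smul_zero_left [simp]: "smul 0 x = 0"
  by (rule fa_eqI) (simp add: Rep_fa_smul Rep_fa_ops)

lemma smul_zero_right [simp]: "smul c 0 = 0"
  by (rule fa_eqI) (simp add: Rep_fa_smul Rep_fa_ops)

lemma smul_minus_right [simp]: "smul c (- x) = - smul c x"
  by (rule fa_eqI) (simp add: Rep_fa_ops Rep_fa_smul)

lemma smul_minus_left: "smul (- c) x = - smul c x"
  by (rule fa_eqI) (simp add: Rep_fa_smul Rep_fa_ops)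

lemma smul_add_right: "smul c (x + y) = smul c x + smul c y"
  by (rule fa_eqI) (simp add: Rep_fa_ops Rep_fa_smul distrib_left)

lemma smul_diff_right: "smul c (x - y) = smul c x - smul c y"
  by (rule fa_eqI) (simp add: Rep_fa_ops Rep_fa_smul right_diff_distrib)

lemma smul_add_left: "smul (c + d) x = smul c x + smul d x"
  by (rule fa_eqI) (simp add: Rep_fa_ops Rep_fa_smul distrib_right)

lemma smul_diff_left: "smul (c - d) x = smul c x - smul d x"
  by (rule fa_eqI) (simp add: Rep_fa_ops Rep_fa_smul left_diff_distrib)

lemmas smul_distribs = smul_add_right smul_diff_right smul_add_left smul_diff_left

lemma smul_sum: "smul c (\<Sum>i\<in>A. f i) = (\<Sum>i\<in>A. smul c (f i))"
  by (induction A rule: infinite_finite_induct) (simp_all add: smul_add_right)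

lemma smul_half_double:
  assumes "(2::'k::field) \<noteq> 0"
  shows "smul (inverse 2) (x + x) = (x :: 'k fa)"
proof -
  have "smul (inverse 2) (x + x) = smul (inverse 2 + inverse 2) x"
    by (simp only: smul_add_right smul_add_left)
  also have "inverse 2 + inverse (2::'k) = 1" using assms by (simp add: field_simps)
  finally show ?thesis by simp
qed

lemma Abs_fa_finite_support:
  assumes "finite {w. f w \<noteq> 0}"
  shows "Abs_fa f = (\<Sum>w | f w \<noteq> 0. smul (f w) (mon w))"
proof (rule fa_eqI)
  fix u
  have "Rep_fa (\<Sum>w | f w \<noteq> 0. smul (f w) (mon w)) u = (\<Sum>w | f w \<noteq> 0. if u = w then f w else 0)"
    unfolding Rep_fa_sum Rep_fa_smul Rep_fa_mon fa_mono_def by (intro sum.cong refl) simp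
  also have "\<dots> = f u" using assms by (simp add: sum.delta)
  finally show "Rep_fa (Abs_fa f) u = Rep_fa (\<Sum>w | f w \<noteq> 0. smul (f w) (mon w)) u"
    by (simp add: Abs_fa_inverse)
qed

section \<open>The congruence modulo the defining ideal\<close>

definition psi :: "nat \<Rightarrow> 'k::field fa" where "psi a = mon [Psi a]"
definition psi_star :: "nat \<Rightarrow> 'k::field fa" where "psi_star a = mon [PsiS a]"
definition omega :: "nat \<Rightarrow> 'k::field fa" where "omega a = mon [Om a]"
definition omega_inv :: "nat \<Rightarrow> 'k::field fa" where "omega_inv a = mon [OmInv a]"

locale quantum_clifford =
  fixes n k :: nat and q :: "'k::field"
  assumes two_nz: "(2::'k) \<noteq> 0" and q_nz: "q \<noteq> 0" and k_pos: "0 < k"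
begin

abbreviation "L \<equiv> cl_letters n"

definition in_ideal :: "'k fa \<Rightarrow> bool" where
  "in_ideal x \<longleftrightarrow> Rep_fa x \<in> cl_ideal n k q"

definition cl_cong :: "'k fa \<Rightarrow> 'k fa \<Rightarrow> bool" (infix "\<approx>" 50) where
  "x \<approx> y \<longleftrightarrow> in_ideal (x - y)"

lemma in_ideal_zero: "in_ideal 0"
  unfolding in_ideal_def cl_ideal_def Rep_fa_ops by (rule two_sided_ideal.zero)

lemma in_ideal_add: "in_ideal x \<Longrightarrow> in_ideal y \<Longrightarrow> in_ideal (x + y)"
  unfolding in_ideal_def cl_ideal_def
  by (drule (1) two_sided_ideal.add) (simp add: fa_add_def Rep_fa_ops)

lemma in_ideal_smul: "in_ideal x \<Longrightarrow> in_ideal (smul c x)"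
  unfolding in_ideal_def cl_ideal_def
  by (drule two_sided_ideal.smult[where c = c]) (simp add: fa_smult_def Rep_fa_smul)

lemma in_ideal_minus: "in_ideal x \<Longrightarrow> in_ideal (- x)"
  by (drule in_ideal_smul[of x "-1"]) (simp add: smul_minus_left)

lemma in_ideal_diff: "in_ideal x \<Longrightarrow> in_ideal y \<Longrightarrow> in_ideal (x - y)"
  unfolding diff_conv_add_uminus by (intro in_ideal_add in_ideal_minus)

lemma in_ideal_mon_mult:
  "in_ideal x \<Longrightarrow> set u \<subseteq> L \<Longrightarrow> set w \<subseteq> L \<Longrightarrow> in_ideal (mon u * x * mon w)"
  unfolding in_ideal_def cl_ideal_def Rep_fa_ops Rep_fa_mon by (rule two_sided_ideal.mult)

text \<open>The ideal is only closed under multiplication by words in the letters of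
  \<open>cl_letters n\<close>, hence by the subalgebra they generate.\<close>
inductive_set word_alg :: "'k fa set" where
  word_alg_mon: "set w \<subseteq> L \<Longrightarrow> mon w \<in> word_alg"
| word_alg_add: "a \<in> word_alg \<Longrightarrow> b \<in> word_alg \<Longrightarrow> a + b \<in> word_alg"
| word_alg_smul: "a \<in> word_alg \<Longrightarrow> smul c a \<in> word_alg"
| word_alg_mult: "a \<in> word_alg \<Longrightarrow> b \<in> word_alg \<Longrightarrow> a * b \<in> word_alg"

lemma word_alg_one: "1 \<in> word_alg"
  using word_alg_mon[of "[]"] by (simp add: mon_Nil)

lemma word_alg_power: "a \<in> word_alg \<Longrightarrow> a ^ m \<in> word_alg"
  by (induction m) (simp_all add: word_alg_one word_alg_mult)

lemma word_alg_sum: "(\<And>i. i \<in> A \<Longrightarrow> f i \<in> word_alg) \<Longrightarrow> (\<Sum>i\<in>A. f i) \<in> word_alg"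
  using word_alg_smul[OF word_alg_one, of 0]
  by (induction A rule: infinite_finite_induct) (simp_all add: word_alg_add)

lemma in_ideal_mult_left: "a \<in> word_alg \<Longrightarrow> in_ideal y \<Longrightarrow> in_ideal (a * y)"
proof (induction a arbitrary: y rule: word_alg.induct)
  case (word_alg_mon w)
  then show ?case using in_ideal_mon_mult[of y w "[]"] by (simp add: mon_Nil)
qed (simp_all add: distrib_right in_ideal_add in_ideal_smul mult.assoc)

lemma in_ideal_mult_right: "a \<in> word_alg \<Longrightarrow> in_ideal y \<Longrightarrow> in_ideal (y * a)"
proof (induction a arbitrary: y rule: word_alg.induct)
  case (word_alg_mon w)
  then show ?case using in_ideal_mon_mult[of y "[]" w] by (simp add: mon_Nil)
qed (simp_all add: distrib_left in_ideal_add in_ideal_smul flip: mult.assoc)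

lemma cong_refl [simp]: "x \<approx> x"
  by (simp add: cl_cong_def in_ideal_zero)

lemma cong_sym: "x \<approx> y \<Longrightarrow> y \<approx> x"
  unfolding cl_cong_def using in_ideal_minus by fastforce

lemma cong_trans [trans]: "x \<approx> y \<Longrightarrow> y \<approx> z \<Longrightarrow> x \<approx> z"
  unfolding cl_cong_def using in_ideal_add by fastforce

lemma cong_add: "x \<approx> y \<Longrightarrow> x' \<approx> y' \<Longrightarrow> x + x' \<approx> y + y'"
  unfolding cl_cong_def using in_ideal_add by (fastforce simp: algebra_simps)

lemma cong_diff: "x \<approx> y \<Longrightarrow> x' \<approx> y' \<Longrightarrow> x - x' \<approx> y - y'"
  unfolding cl_cong_def using in_ideal_diff by (fastforce simp: algebra_simps)

lemma cong_smul: "x \<approx> y \<Longrightarrow> smul c x \<approx> smul c y"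
  unfolding cl_cong_def using in_ideal_smul by (fastforce simp: smul_diff_right)

lemma cong_mult_left: "a \<in> word_alg \<Longrightarrow> x \<approx> y \<Longrightarrow> a * x \<approx> a * y"
  unfolding cl_cong_def using in_ideal_mult_left by (fastforce simp: right_diff_distrib)

lemma cong_mult_right: "a \<in> word_alg \<Longrightarrow> x \<approx> y \<Longrightarrow> x * a \<approx> y * a"
  unfolding cl_cong_def using in_ideal_mult_right by (fastforce simp: left_diff_distrib)

lemma cong_rearrange: "x \<approx> y \<Longrightarrow> z - z' = x - y \<Longrightarrow> z \<approx> z'"
  by (simp add: cl_cong_def)

lemma cong_neg_swap: "x \<approx> - y \<Longrightarrow> y \<approx> - x"
  unfolding cl_cong_def by (simp add: add.commute)

lemma cong_neg_self_zero: "x \<approx> - x \<Longrightarrow> x \<approx> 0"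
proof -
  assume "x \<approx> - x"
  then have "smul (inverse 2) (x + x) \<approx> smul (inverse 2) (- x + x)"
    by (intro cong_smul cong_add cong_refl)
  then show ?thesis using smul_half_double[OF two_nz, of x] by simp
qed

lemma cl_letters_site: "a \<in> {1..n} \<Longrightarrow> Psi a \<in> L \<and> PsiS a \<in> L \<and> Om a \<in> L \<and> OmInv a \<in> L"
  by (auto simp: cl_letters_def)

lemma generators_word_alg:
  assumes "a \<in> {1..n}"
  shows "psi a \<in> word_alg" "psi_star a \<in> word_alg" "omega a \<in> word_alg" "omega_inv a \<in> word_alg"
  using cl_letters_site[OF assms]
  by (auto simp: psi_def psi_star_def omega_def omega_inv_def intro!: word_alg_mon)

lemma defining_relations:
  assumes a: "a \<in> {1..n}" and b: "b \<in> {1..n}"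
  shows omega_comm: "omega a * omega b \<approx> omega b * omega a"
    and omega_omega_inv: "omega a * omega_inv a \<approx> 1"
    and omega_inv_omega: "omega_inv a * omega a \<approx> 1"
    and omega_psi: "omega a * psi b \<approx> smul (if a = b then q else 1) (psi b * omega a)"
    and omega_psi_star:
      "omega a * psi_star b \<approx> smul (if a = b then inverse q else 1) (psi_star b * omega a)"
    and psi_anticomm: "psi a * psi b \<approx> - (psi b * psi a)"
    and psi_star_anticomm: "psi_star a * psi_star b \<approx> - (psi_star b * psi_star a)"
    and psi_psi_star_omega_inv:
      "psi a * psi_star a + smul (q ^ k) (psi_star a * psi a) \<approx> omega_inv a ^ k"
    and psi_psi_star_omega:
      "psi a * psi_star a + smul (inverse (q ^ k)) (psi_star a * psi a) \<approx> omega a ^ k"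
    and psi_psi_star_anticomm: "a \<noteq> b \<Longrightarrow> psi a * psi_star b \<approx> - (psi_star b * psi a)"
proof -
  have ball_if_empty: "(\<forall>r\<in>(if P then A else {}). Q r) \<longleftrightarrow> (P \<longrightarrow> (\<forall>r\<in>A. Q r))" for P A Q
    by simp
  have "\<forall>r\<in>cl_relations n k q. in_ideal (Abs_fa r)"
    by (simp add: in_ideal_def cl_ideal_def Abs_fa_inverse two_sided_ideal.gen)
  then have "\<forall>a\<in>{1..n}. \<forall>b\<in>{1..n}.
      in_ideal (omega a * omega b - omega b * omega a) \<and> in_ideal (omega a * omega_inv a - 1) \<and>
      in_ideal (omega_inv a * omega a - 1) \<and>
      in_ideal (omega a * psi b - smul (if a = b then q else 1) (psi b * omega a)) \<and>
      in_ideal (omega a * psi_star b -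
        smul (if a = b then inverse q else 1) (psi_star b * omega a)) \<and>
      in_ideal (psi a * psi b + psi b * psi a) \<and>
      in_ideal (psi_star a * psi_star b + psi_star b * psi_star a) \<and>
      in_ideal (psi a * psi_star a + smul (q ^ k) (psi_star a * psi a) - omega_inv a ^ k) \<and>
      in_ideal (psi a * psi_star a + smul (inverse (q ^ k)) (psi_star a * psi a) - omega a ^ k) \<and>
      (a \<noteq> b \<longrightarrow> in_ideal (psi a * psi_star b + psi_star b * psi a))"
    unfolding cl_relations_def
    by (simp add: Abs_fa_ops Abs_fa_pow psi_def psi_star_def omega_def omega_inv_def ball_if_empty)
  then show "omega a * omega b \<approx> omega b * omega a" "omega a * omega_inv a \<approx> 1"
    "omega_inv a * omega a \<approx> 1" "omega a * psi b \<approx> smul (if a = b then q else 1) (psi b * omega a)"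
    "omega a * psi_star b \<approx> smul (if a = b then inverse q else 1) (psi_star b * omega a)"
    "psi a * psi b \<approx> - (psi b * psi a)" "psi_star a * psi_star b \<approx> - (psi_star b * psi_star a)"
    "psi a * psi_star a + smul (q ^ k) (psi_star a * psi a) \<approx> omega_inv a ^ k"
    "psi a * psi_star a + smul (inverse (q ^ k)) (psi_star a * psi a) \<approx> omega a ^ k"
    "a \<noteq> b \<Longrightarrow> psi a * psi_star b \<approx> - (psi_star b * psi a)"
    using a b unfolding cl_cong_def by simp_all
qed

end

section \<open>Spanning\<close>

definition site_letters :: "nat \<Rightarrow> cgen set" where
  "site_letters a = {Psi a, PsiS a, Om a}"

definition site_word :: "nat \<Rightarrow> nat \<Rightarrow> nat \<Rightarrow> nat \<Rightarrow> cgen list" where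
  "site_word a p d v = replicate p (Psi a) @ replicate d (PsiS a) @ replicate v (Om a)"

lemma mon_site_word: "mon (site_word a p d v) = psi a ^ p * psi_star a ^ d * omega a ^ v"
  by (simp add: site_word_def mon_append mon_replicate psi_def psi_star_def omega_def mult.assoc)

lemma set_site_word: "set (site_word a p d v) \<subseteq> site_letters a"
  by (auto simp: site_word_def site_letters_def)

lemma cl_monomial_word_site_words:
  "cl_monomial_word n p d v = concat (map (\<lambda>b. site_word b (p b) (d b) (v b)) [1..<Suc n])"
  by (simp add: cl_monomial_word_def site_word_def)

lemma upt_split_at:
  assumes "1 \<le> a" "a \<le> n"
  shows "[1..<Suc n] = [1..<a] @ a # [Suc a..<Suc n]"
proof -
  have "[1..<Suc n] = [1..<a] @ [a..<Suc n]"
    using upt_add_eq_append[of 1 a "Suc n - a"] assms by simp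
  also have "[a..<Suc n] = a # [Suc a..<Suc n]" using assms by (simp add: upt_conv_Cons)
  finally show ?thesis .
qed

definition cl_monomial_prefix :: "(nat \<Rightarrow> nat) \<Rightarrow> (nat \<Rightarrow> nat) \<Rightarrow> (nat \<Rightarrow> nat) \<Rightarrow> nat \<Rightarrow> cgen list" where
  "cl_monomial_prefix p d v a = concat (map (\<lambda>b. site_word b (p b) (d b) (v b)) [1..<a])"

definition cl_monomial_suffix ::
    "nat \<Rightarrow> (nat \<Rightarrow> nat) \<Rightarrow> (nat \<Rightarrow> nat) \<Rightarrow> (nat \<Rightarrow> nat) \<Rightarrow> nat \<Rightarrow> cgen list" where
  "cl_monomial_suffix n p d v a = concat (map (\<lambda>b. site_word b (p b) (d b) (v b)) [Suc a..<Suc n])"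

lemma cl_monomial_word_split:
  assumes "a \<in> {1..n}"
  shows "cl_monomial_word n p d v =
    cl_monomial_prefix p d v a @ site_word a (p a) (d a) (v a) @ cl_monomial_suffix n p d v a"
proof -
  have "[1..<Suc n] = [1..<a] @ a # [Suc a..<Suc n]" using assms by (intro upt_split_at) auto
  then show ?thesis
    unfolding cl_monomial_word_site_words cl_monomial_prefix_def cl_monomial_suffix_def
    by (simp del: upt_Suc)
qed

lemma cl_monomial_word_update:
  assumes "a \<in> {1..n}"
  shows "cl_monomial_word n (p(a := p')) (d(a := d')) (v(a := v')) =
    cl_monomial_prefix p d v a @ site_word a p' d' v' @ cl_monomial_suffix n p d v a"
proof -
  have "cl_monomial_prefix (p(a := p')) (d(a := d')) (v(a := v')) a = cl_monomial_prefix p d v a"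
    unfolding cl_monomial_prefix_def by (intro arg_cong[where f = concat] map_cong) auto
  moreover have "cl_monomial_suffix n (p(a := p')) (d(a := d')) (v(a := v')) a =
      cl_monomial_suffix n p d v a"
    unfolding cl_monomial_suffix_def by (intro arg_cong[where f = concat] map_cong) auto
  ultimately show ?thesis
    using cl_monomial_word_split[OF assms, of "p(a := p')" "d(a := d')" "v(a := v')"]
    by simp
qed

lemma set_cl_monomial_prefix:
  "set (cl_monomial_prefix p d v a) \<subseteq> (\<Union>b\<in>{1..<a}. site_letters b)"
  unfolding cl_monomial_prefix_def using set_site_word by (force simp del: upt_Suc)

lemma set_cl_monomial_suffix:
  "set (cl_monomial_suffix n p d v a) \<subseteq> (\<Union>b\<in>{Suc a..n}. site_letters b)"
  unfolding cl_monomial_suffix_def using set_site_word by (force simp del: upt_Suc)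

lemma set_cl_monomial_word: "set (cl_monomial_word n p d v) \<subseteq> (\<Union>b\<in>{1..n}. site_letters b)"
  unfolding cl_monomial_word_site_words using set_site_word by (force simp del: upt_Suc)

context quantum_clifford
begin

lemma q_power_nz: "q ^ j \<noteq> 0"
  using q_nz by simp

lemma site_letters_subset: "a \<in> {1..n} \<Longrightarrow> site_letters a \<subseteq> L"
  using cl_letters_site by (auto simp: site_letters_def)

lemma site_letters_union_subset: "A \<subseteq> {1..n} \<Longrightarrow> (\<Union>b\<in>A. site_letters b) \<subseteq> L"
  using site_letters_subset by blast

definition cl_span :: "cgen list set \<Rightarrow> 'k fa set" where
  "cl_span G = {x. \<exists>S c. finite S \<and> S \<subseteq> G \<and> x \<approx> (\<Sum>w\<in>S. smul (c w) (mon w))}"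

lemma cl_spanI: "finite S \<Longrightarrow> S \<subseteq> G \<Longrightarrow> x \<approx> (\<Sum>w\<in>S. smul (c w) (mon w)) \<Longrightarrow> x \<in> cl_span G"
  unfolding cl_span_def by blast

lemma cl_spanE:
  assumes "x \<in> cl_span G"
  obtains S c where "finite S" "S \<subseteq> G" "x \<approx> (\<Sum>w\<in>S. smul (c w) (mon w))"
  using assms unfolding cl_span_def by blast

lemma cl_span_mon: "w \<in> G \<Longrightarrow> mon w \<in> cl_span G"
  by (rule cl_spanI[of "{w}" _ _ "\<lambda>_. 1"]) simp_all

lemma cl_span_zero: "0 \<in> cl_span G"
  by (rule cl_spanI[of "{}"]) simp_all

lemma cl_span_cong: "x \<approx> y \<Longrightarrow> y \<in> cl_span G \<Longrightarrow> x \<in> cl_span G"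
  by (erule cl_spanE, rule cl_spanI, assumption+, erule (1) cong_trans)

lemma sum_smul_mon_extend:
  assumes "finite T" "S \<subseteq> T"
  shows "(\<Sum>w\<in>T. smul (if w \<in> S then c w else 0) (mon w)) = (\<Sum>w\<in>S. smul (c w) (mon w))"
proof -
  have "(\<Sum>w\<in>T. smul (if w \<in> S then c w else 0) (mon w)) =
      (\<Sum>w\<in>S. smul (if w \<in> S then c w else 0) (mon w))"
    by (rule sum.mono_neutral_right[OF assms]) auto
  then show ?thesis by simp
qed

lemma cl_span_add: "x \<in> cl_span G \<Longrightarrow> y \<in> cl_span G \<Longrightarrow> x + y \<in> cl_span G"
proof -
  assume "x \<in> cl_span G" "y \<in> cl_span G"
  then obtain S1 c1 S2 c2 where h: "finite S1" "S1 \<subseteq> G" "x \<approx> (\<Sum>w\<in>S1. smul (c1 w) (mon w))"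
    "finite S2" "S2 \<subseteq> G" "y \<approx> (\<Sum>w\<in>S2. smul (c2 w) (mon w))"
    by (metis cl_spanE)
  let ?c = "\<lambda>w. (if w \<in> S1 then c1 w else 0) + (if w \<in> S2 then c2 w else 0)"
  have "x + y \<approx> (\<Sum>w\<in>S1. smul (c1 w) (mon w)) + (\<Sum>w\<in>S2. smul (c2 w) (mon w))"
    using h by (intro cong_add)
  also have "\<dots> = (\<Sum>w\<in>S1 \<union> S2. smul (?c w) (mon w))"
    using h by (simp add: smul_add_left sum.distrib sum_smul_mon_extend)
  finally show ?thesis using h by (intro cl_spanI[of "S1 \<union> S2"]) auto
qed

lemma cl_span_smul: "x \<in> cl_span G \<Longrightarrow> smul c x \<in> cl_span G"
proof -
  assume "x \<in> cl_span G"
  then obtain S c1 where h: "finite S" "S \<subseteq> G" "x \<approx> (\<Sum>w\<in>S. smul (c1 w) (mon w))"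
    by (rule cl_spanE)
  have "smul c x \<approx> smul c (\<Sum>w\<in>S. smul (c1 w) (mon w))" using h by (intro cong_smul)
  also have "\<dots> = (\<Sum>w\<in>S. smul (c * c1 w) (mon w))" by (simp add: smul_sum)
  finally show ?thesis using h by (intro cl_spanI[of S]) auto
qed

lemma cl_span_diff: "x \<in> cl_span G \<Longrightarrow> y \<in> cl_span G \<Longrightarrow> x - y \<in> cl_span G"
  using cl_span_smul[of y G "-1"] cl_span_add[of x G "- y"] by (simp add: smul_minus_left)

lemma cl_span_sum: "(\<And>i. i \<in> A \<Longrightarrow> f i \<in> cl_span G) \<Longrightarrow> (\<Sum>i\<in>A. f i) \<in> cl_span G"
  by (induction A rule: infinite_finite_induct) (simp_all add: cl_span_zero cl_span_add)

lemma cl_span_mon_mult_mon: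
  assumes x: "x \<in> cl_span G1" and G: "\<And>w. w \<in> G1 \<Longrightarrow> u @ w @ v \<in> G2"
    and u: "set u \<subseteq> L" and v: "set v \<subseteq> L"
  shows "mon u * x * mon v \<in> cl_span G2"
proof -
  obtain S c where h: "finite S" "S \<subseteq> G1" "x \<approx> (\<Sum>w\<in>S. smul (c w) (mon w))"
    using x by (rule cl_spanE)
  have "mon u * x * mon v \<approx> mon u * (\<Sum>w\<in>S. smul (c w) (mon w)) * mon v"
    using h u v by (intro cong_mult_right cong_mult_left word_alg_mon)
  also have "\<dots> = (\<Sum>w\<in>S. smul (c w) (mon (u @ w @ v)))"
    by (simp add: sum_distrib_left sum_distrib_right mon_append mult.assoc)
  finally show ?thesis
    by (rule cl_span_cong) (use h G in \<open>auto intro!: cl_span_sum cl_span_smul cl_span_mon\<close>)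
qed

definition site_basis :: "nat \<Rightarrow> cgen list set" where
  "site_basis a = {site_word a p d v | p d v. p \<le> 1 \<and> d \<le> 1 \<and> v < 2 * k}"

context
  fixes a assumes a: "a \<in> {1..n}"
begin

lemmas gens = generators_word_alg[OF a]

lemma psi_square: "psi a * psi a \<approx> 0"
  by (rule cong_neg_self_zero[OF psi_anticomm[OF a a]])

lemma psi_star_square: "psi_star a * psi_star a \<approx> 0"
  by (rule cong_neg_self_zero[OF psi_star_anticomm[OF a a]])

lemma omega_power_psi: "omega a ^ j * psi a \<approx> smul (q ^ j) (psi a * omega a ^ j)"
proof (induction j)
  case (Suc j)
  have "omega a ^ Suc j * psi a = omega a * (omega a ^ j * psi a)" by (simp add: mult.assoc)
  also have "\<dots> \<approx> omega a * smul (q ^ j) (psi a * omega a ^ j)"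
    by (rule cong_mult_left[OF gens(3) Suc])
  also have "\<dots> = smul (q ^ j) ((omega a * psi a) * omega a ^ j)" by (simp add: mult.assoc)
  also have "\<dots> \<approx> smul (q ^ j) (smul q (psi a * omega a) * omega a ^ j)"
    using omega_psi[OF a a] by (intro cong_smul cong_mult_right word_alg_power gens) simp
  also have "\<dots> = smul (q ^ Suc j) (psi a * omega a ^ Suc j)" by (simp add: mult.assoc mult.commute)
  finally show ?case .
qed simp

lemma omega_power_psi_star:
  "omega a ^ j * psi_star a \<approx> smul (inverse q ^ j) (psi_star a * omega a ^ j)"
proof (induction j)
  case (Suc j)
  have "omega a ^ Suc j * psi_star a = omega a * (omega a ^ j * psi_star a)"
    by (simp add: mult.assoc)
  also have "\<dots> \<approx> omega a * smul (inverse q ^ j) (psi_star a * omega a ^ j)"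
    by (rule cong_mult_left[OF gens(3) Suc])
  also have "\<dots> = smul (inverse q ^ j) ((omega a * psi_star a) * omega a ^ j)"
    by (simp add: mult.assoc)
  also have "\<dots> \<approx> smul (inverse q ^ j) (smul (inverse q) (psi_star a * omega a) * omega a ^ j)"
    using omega_psi_star[OF a a] by (intro cong_smul cong_mult_right word_alg_power gens) simp
  also have "\<dots> = smul (inverse q ^ Suc j) (psi_star a * omega a ^ Suc j)"
    by (simp add: mult.assoc mult.commute)
  finally show ?case .
qed simp

lemma omega_power_omega_inv_power: "omega a ^ j * omega_inv a ^ j \<approx> 1"
proof (induction j)
  case (Suc j)
  have "omega a ^ Suc j * omega_inv a ^ Suc j
      = omega a ^ j * ((omega a * omega_inv a) * omega_inv a ^ j)"
    by (simp only: power_Suc2[of "omega a" j] power_Suc[of "omega_inv a" j] mult.assoc)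
  also have "\<dots> \<approx> omega a ^ j * (1 * omega_inv a ^ j)"
    by (intro cong_mult_left cong_mult_right word_alg_power gens omega_omega_inv[OF a a])
  also have "\<dots> \<approx> 1" using Suc by simp
  finally show ?case .
qed simp

lemma psi_star_psi: "psi_star a * psi a \<approx> smul (q ^ k) (omega a ^ k - psi a * psi_star a)"
proof -
  have "smul (q ^ k) (smul (inverse (q ^ k)) (psi_star a * psi a))
      \<approx> smul (q ^ k) (omega a ^ k - psi a * psi_star a)"
    using cong_diff[OF psi_psi_star_omega[OF a a] cong_refl, of "psi a * psi_star a"]
    by (intro cong_smul) simp
  then show ?thesis using q_power_nz[of k] by simp
qed

lemma omega_power_psi_psi_star:
  "omega a ^ j * (psi a * psi_star a) \<approx> psi a * psi_star a * omega a ^ j"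
proof -
  have "omega a ^ j * (psi a * psi_star a) = (omega a ^ j * psi a) * psi_star a"
    by (simp add: mult.assoc)
  also have "\<dots> \<approx> smul (q ^ j) (psi a * omega a ^ j) * psi_star a"
    by (intro cong_mult_right gens omega_power_psi)
  also have "\<dots> = smul (q ^ j) (psi a * (omega a ^ j * psi_star a))" by (simp add: mult.assoc)
  also have "\<dots> \<approx> smul (q ^ j) (psi a * smul (inverse q ^ j) (psi_star a * omega a ^ j))"
    by (intro cong_smul cong_mult_left gens omega_power_psi_star)
  also have "\<dots> = psi a * psi_star a * omega a ^ j"
    using q_power_nz[of j] by (simp add: mult.assoc power_inverse)
  finally show ?thesis .
qed

lemma omega_power_k_psi_star_psi:
  "omega a ^ k * (psi_star a * psi a) \<approx> psi_star a * psi a * omega a ^ k"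
proof -
  have "omega a ^ k * (psi_star a * psi a) = (omega a ^ k * psi_star a) * psi a"
    by (simp add: mult.assoc)
  also have "\<dots> \<approx> smul (inverse q ^ k) (psi_star a * omega a ^ k) * psi a"
    by (intro cong_mult_right gens omega_power_psi_star)
  also have "\<dots> = smul (inverse q ^ k) (psi_star a * (omega a ^ k * psi a))"
    by (simp add: mult.assoc)
  also have "\<dots> \<approx> smul (inverse q ^ k) (psi_star a * smul (q ^ k) (psi a * omega a ^ k))"
    by (intro cong_smul cong_mult_left gens omega_power_psi)
  also have "\<dots> = psi_star a * psi a * omega a ^ k"
    using q_power_nz[of k] by (simp add: mult.assoc power_inverse)
  finally show ?thesis .
qed

text \<open>Multiply the relation for \<open>omega_inv a ^ k\<close> by \<open>omega a ^ k\<close> and eliminate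
  \<open>psi_star a * psi a\<close> with the relation for \<open>omega a ^ k\<close>.\<close>
lemma omega_power_2k:
  "smul (q ^ (2 * k)) (omega a ^ (2 * k))
      \<approx> 1 + smul (q ^ (2 * k) - 1) (psi a * psi_star a * omega a ^ k)"
proof -
  let ?X = "psi a * psi_star a + smul (q ^ k) (psi_star a * psi a)"
  have "omega a ^ k * ?X \<approx> omega a ^ k * omega_inv a ^ k"
    by (intro cong_mult_left word_alg_power gens psi_psi_star_omega_inv[OF a a])
  also have "\<dots> \<approx> 1" by (rule omega_power_omega_inv_power)
  finally have one: "omega a ^ k * ?X \<approx> 1" .
  have "omega a ^ k * ?X
      = omega a ^ k * (psi a * psi_star a) + smul (q ^ k) (omega a ^ k * (psi_star a * psi a))"
    by (simp add: distrib_left)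
  also have "\<dots> \<approx> psi a * psi_star a * omega a ^ k + smul (q ^ k) (psi_star a * psi a * omega a ^ k)"
    by (intro cong_add cong_smul omega_power_psi_psi_star omega_power_k_psi_star_psi)
  also have "\<dots> \<approx> psi a * psi_star a * omega a ^ k +
      smul (q ^ k) (smul (q ^ k) (omega a ^ k - psi a * psi_star a) * omega a ^ k)"
    by (intro cong_add cong_smul cong_refl cong_mult_right word_alg_power gens psi_star_psi)
  finally have "psi a * psi_star a * omega a ^ k +
      smul (q ^ k) (smul (q ^ k) (omega a ^ k - psi a * psi_star a) * omega a ^ k) \<approx> 1"
    using one by (blast intro: cong_trans cong_sym)
  then show ?thesis
    by (rule cong_rearrange) (simp only: power_double, simp add: algebra_simps smul_distribs)
qed

lemma psi_star_psi_psi_star: "psi_star a * psi a * psi_star a \<approx> psi_star a * omega a ^ k"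
proof -
  have "psi_star a * psi a * psi_star a
      \<approx> smul (q ^ k) (omega a ^ k - psi a * psi_star a) * psi_star a"
    by (intro cong_mult_right gens psi_star_psi)
  also have "\<dots>
      = smul (q ^ k) (omega a ^ k * psi_star a) - smul (q ^ k) (psi a * (psi_star a * psi_star a))"
    by (simp add: algebra_simps smul_distribs)
  also have "\<dots>
      \<approx> smul (q ^ k) (smul (inverse q ^ k) (psi_star a * omega a ^ k)) - smul (q ^ k) (psi a * 0)"
    by (intro cong_diff cong_smul cong_mult_left gens omega_power_psi_star psi_star_square)
  also have "\<dots> = psi_star a * omega a ^ k"
    using q_power_nz[of k] by (simp add: power_inverse)
  finally show ?thesis .
qed

lemma psi_star_omega_power_2k: "psi_star a * omega a ^ (2 * k) \<approx> psi_star a"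
proof -
  have "psi_star a * smul (q ^ (2 * k)) (omega a ^ (2 * k)) \<approx>
      psi_star a * (1 + smul (q ^ (2 * k) - 1) (psi a * psi_star a * omega a ^ k))"
    by (intro cong_mult_left gens omega_power_2k)
  also have "\<dots>
      = psi_star a + smul (q ^ (2 * k) - 1) ((psi_star a * psi a * psi_star a) * omega a ^ k)"
    by (simp add: algebra_simps)
  also have "\<dots> \<approx> psi_star a + smul (q ^ (2 * k) - 1) ((psi_star a * omega a ^ k) * omega a ^ k)"
    by (intro cong_add cong_refl cong_smul cong_mult_right word_alg_power gens
      psi_star_psi_psi_star)
  finally show ?thesis
    by (rule cong_rearrange) (simp only: power_double, simp add: algebra_simps smul_distribs)
qed

lemma psi_omega_power_2k: "psi a * omega a ^ (2 * k) \<approx> smul (inverse (q ^ (2 * k))) (psi a)"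
proof -
  have "psi a * smul (q ^ (2 * k)) (omega a ^ (2 * k)) \<approx>
      psi a * (1 + smul (q ^ (2 * k) - 1) (psi a * psi_star a * omega a ^ k))"
    by (intro cong_mult_left gens omega_power_2k)
  also have "\<dots> = psi a + smul (q ^ (2 * k) - 1) ((psi a * psi a) * (psi_star a * omega a ^ k))"
    by (simp add: algebra_simps)
  also have "\<dots> \<approx> psi a + smul (q ^ (2 * k) - 1) (0 * (psi_star a * omega a ^ k))"
    by (intro cong_add cong_refl cong_smul cong_mult_right word_alg_power word_alg_mult gens
      psi_square)
  finally have "smul (inverse (q ^ (2 * k))) (psi a * smul (q ^ (2 * k)) (omega a ^ (2 * k))) \<approx>
      smul (inverse (q ^ (2 * k))) (psi a)"
    by (intro cong_smul) simp
  then show ?thesis using q_power_nz[of "2 * k"] by simp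
qed

lemma psi_psi_star_omega_power_2k: "psi a * psi_star a * omega a ^ (2 * k) \<approx> psi a * psi_star a"
  using cong_mult_left[OF gens(1) psi_star_omega_power_2k] by (simp add: mult.assoc)

lemma omega_power_2k_reduce:
  "omega a ^ (2 * k) \<approx> smul (inverse (q ^ (2 * k))) 1 +
     smul (1 - inverse (q ^ (2 * k))) (psi a * psi_star a * omega a ^ k)"
proof -
  have "smul (inverse (q ^ (2 * k))) (smul (q ^ (2 * k)) (omega a ^ (2 * k))) \<approx>
        smul (inverse (q ^ (2 * k)))
          (1 + smul (q ^ (2 * k) - 1) (psi a * psi_star a * omega a ^ k))"
    by (intro cong_smul omega_power_2k)
  then show ?thesis using q_power_nz[of "2 * k"] by (simp add: smul_distribs algebra_simps)
qed

text \<open>So \<open>omega_inv a\<close> need not be treated as a separate generator.\<close>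
lemma omega_inv_expand:
  "omega_inv a \<approx> smul (q ^ (2 * k)) (omega a ^ (2 * k - 1)) -
     smul (q ^ (2 * k) - 1) (psi a * psi_star a * omega a ^ (k - 1))"
proof -
  have e1: "omega a ^ (2 * k) = omega a ^ (2 * k - 1) * omega a"
    and e2: "omega a ^ k = omega a ^ (k - 1) * omega a"
    using k_pos by (simp_all flip: power_Suc2)
  have WV: "x * (omega a * omega_inv a) \<approx> x" if "x \<in> word_alg" for x
    using cong_mult_left[OF that omega_omega_inv[OF a a]] by simp
  have "smul (q ^ (2 * k)) (omega a ^ (2 * k)) * omega_inv a \<approx>
      (1 + smul (q ^ (2 * k) - 1) (psi a * psi_star a * omega a ^ k)) * omega_inv a"
    by (intro cong_mult_right gens omega_power_2k)
  then have "smul (q ^ (2 * k)) (omega a ^ (2 * k - 1) * (omega a * omega_inv a)) \<approx>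
      omega_inv a + smul (q ^ (2 * k) - 1)
        (psi a * psi_star a * omega a ^ (k - 1) * (omega a * omega_inv a))"
    by (simp only: e1 e2 distrib_right smul_mult_left mult.assoc mult_1_left)
  moreover have "smul (q ^ (2 * k)) (omega a ^ (2 * k - 1) * (omega a * omega_inv a)) \<approx>
      smul (q ^ (2 * k)) (omega a ^ (2 * k - 1))"
    by (intro cong_smul WV word_alg_power gens)
  moreover have "omega_inv a + smul (q ^ (2 * k) - 1)
        (psi a * psi_star a * omega a ^ (k - 1) * (omega a * omega_inv a)) \<approx>
      omega_inv a + smul (q ^ (2 * k) - 1) (psi a * psi_star a * omega a ^ (k - 1))"
    by (intro cong_add cong_refl cong_smul WV word_alg_mult word_alg_power gens)
  ultimately have "smul (q ^ (2 * k)) (omega a ^ (2 * k - 1)) \<approx>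
      omega_inv a + smul (q ^ (2 * k) - 1) (psi a * psi_star a * omega a ^ (k - 1))"
    by (blast intro: cong_trans cong_sym)
  then show ?thesis by (rule cong_rearrange[OF cong_sym]) (simp add: algebra_simps)
qed

lemma site_monomial_wrap:
  assumes "p \<le> 1" "d \<le> 1"
  obtains c1 c2 where
    "psi a ^ p * psi_star a ^ d * omega a ^ (2 * k + j) \<approx>
       smul c1 (psi a ^ p * psi_star a ^ d * omega a ^ j) +
       smul c2 (psi a ^ 1 * psi_star a ^ 1 * omega a ^ (k + j))"
proof -
  have right: "x \<approx> y \<Longrightarrow> x * omega a ^ j \<approx> y * omega a ^ j" for x y
    by (intro cong_mult_right word_alg_power gens)
  have "p = 0 \<or> p = 1" "d = 0 \<or> d = 1" using assms by auto
  then consider "p = 0" "d = 0" | "p = 1" "d = 0" | "p = 0" "d = 1" | "p = 1" "d = 1" by blast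
  then show thesis
  proof cases
    case 1
    with right[OF omega_power_2k_reduce] show thesis
      by (intro that) (simp add: distrib_right mult.assoc power_add)
  next
    case 2
    with right[OF psi_omega_power_2k] show thesis
      by (intro that[of "inverse (q ^ (2 * k))" 0]) (simp add: mult.assoc power_add)
  next
    case 3
    with right[OF psi_star_omega_power_2k] show thesis
      by (intro that[of 1 0]) (simp add: mult.assoc power_add)
  next
    case 4
    with right[OF psi_psi_star_omega_power_2k] show thesis
      by (intro that[of 1 0]) (simp add: mult.assoc power_add)
  qed
qed

lemma site_monomial_in_span:
  "p \<le> 1 \<Longrightarrow> d \<le> 1 \<Longrightarrow> psi a ^ p * psi_star a ^ d * omega a ^ j \<in> cl_span (site_basis a)"
proof (induction j arbitrary: p d rule: less_induct)
  case (less j)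
  show ?case
  proof (cases "j < 2 * k")
    case True
    then show ?thesis using less.prems unfolding site_basis_def
      by (intro cl_span_mon[of "site_word a p d j", unfolded mon_site_word]) blast
  next
    case False
    then obtain j' where j: "j = 2 * k + j'" by (metis le_add_diff_inverse not_less)
    obtain c1 c2 where wrap: "psi a ^ p * psi_star a ^ d * omega a ^ j \<approx>
        smul c1 (psi a ^ p * psi_star a ^ d * omega a ^ j') +
        smul c2 (psi a ^ 1 * psi_star a ^ 1 * omega a ^ (k + j'))"
      using site_monomial_wrap[OF less.prems] unfolding j by blast
    have "j' < j" "k + j' < j" using j k_pos by auto
    then show ?thesis
      by (intro cl_span_cong[OF wrap] cl_span_add cl_span_smul less.IH less.prems order.refl)
  qed
qed

lemma psi_mult_site_monomial:
  assumes "p \<le> 1" "d \<le> 1"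
  shows "psi a * (psi a ^ p * psi_star a ^ d * omega a ^ v) \<in> cl_span (site_basis a)"
proof (cases "p = 0")
  case True
  then show ?thesis using site_monomial_in_span[of 1 d v] assms by (simp add: mult.assoc)
next
  case False
  with assms have "p = 1" by simp
  then have "psi a * (psi a ^ p * psi_star a ^ d * omega a ^ v) =
      (psi a * psi a) * (psi_star a ^ d * omega a ^ v)"
    by (simp add: mult.assoc)
  also have "\<dots> \<approx> 0 * (psi_star a ^ d * omega a ^ v)"
    by (intro cong_mult_right word_alg_mult word_alg_power gens psi_square)
  finally show ?thesis by (simp add: cl_span_cong cl_span_zero)
qed

lemma psi_star_mult_site_monomial:
  assumes "p \<le> 1" "d \<le> 1"
  shows "psi_star a * (psi a ^ p * psi_star a ^ d * omega a ^ v) \<in> cl_span (site_basis a)"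
proof -
  have right: "x \<approx> y \<Longrightarrow> x * omega a ^ v \<approx> y * omega a ^ v" for x y
    by (intro cong_mult_right word_alg_power gens)
  consider "p = 0" "d = 0" | "p = 0" "d = 1" | "p = 1" "d = 0" | "p = 1" "d = 1"
    using assms by linarith
  then show ?thesis
  proof cases
    case 1
    then show ?thesis using site_monomial_in_span[of 0 1 v] by simp
  next
    case 2
    then have "psi_star a * (psi a ^ p * psi_star a ^ d * omega a ^ v) \<approx> 0 * omega a ^ v"
      using right[OF psi_star_square] by (simp add: mult.assoc)
    then show ?thesis by (simp add: cl_span_cong cl_span_zero)
  next
    case 3
    have "psi_star a * (psi a ^ p * psi_star a ^ d * omega a ^ v) \<approx>
        smul (q ^ k) (omega a ^ k - psi a * psi_star a) * omega a ^ v"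
      using 3 right[OF psi_star_psi] by (simp add: mult.assoc)
    also have "\<dots> = smul (q ^ k) (psi a ^ 0 * psi_star a ^ 0 * omega a ^ (k + v)) -
        smul (q ^ k) (psi a ^ 1 * psi_star a ^ 1 * omega a ^ v)"
      by (simp add: algebra_simps smul_distribs power_add)
    finally show ?thesis
      by (rule cl_span_cong) (intro cl_span_diff cl_span_smul site_monomial_in_span; simp)
  next
    case 4
    have "psi_star a * (psi a ^ p * psi_star a ^ d * omega a ^ v) \<approx>
        psi a ^ 0 * psi_star a ^ 1 * omega a ^ (k + v)"
      using 4 right[OF psi_star_psi_psi_star] by (simp add: mult.assoc power_add)
    then show ?thesis by (rule cl_span_cong) (intro site_monomial_in_span; simp)
  qed
qed

lemma omega_mult_site_monomial:
  assumes "p \<le> 1" "d \<le> 1"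
  shows "omega a * (psi a ^ p * psi_star a ^ d * omega a ^ v) \<in> cl_span (site_basis a)"
proof -
  have right: "x \<approx> y \<Longrightarrow> x * omega a ^ v \<approx> y * omega a ^ v" for x y
    by (intro cong_mult_right word_alg_power gens)
  consider "p = 0" "d = 0" | "p = 0" "d = 1" | "p = 1" "d = 0" | "p = 1" "d = 1"
    using assms by linarith
  then show ?thesis
  proof cases
    case 1
    then show ?thesis using site_monomial_in_span[of 0 0 "Suc v"] by simp
  next
    case 2
    then have "omega a * (psi a ^ p * psi_star a ^ d * omega a ^ v) \<approx>
        smul (inverse q) (psi a ^ 0 * psi_star a ^ 1 * omega a ^ Suc v)"
      using right[OF omega_power_psi_star[of 1]] by (simp add: mult.assoc)
    then show ?thesis by (rule cl_span_cong) (intro cl_span_smul site_monomial_in_span; simp)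
  next
    case 3
    then have "omega a * (psi a ^ p * psi_star a ^ d * omega a ^ v) \<approx>
        smul q (psi a ^ 1 * psi_star a ^ 0 * omega a ^ Suc v)"
      using right[OF omega_power_psi[of 1]] by (simp add: mult.assoc)
    then show ?thesis by (rule cl_span_cong) (intro cl_span_smul site_monomial_in_span; simp)
  next
    case 4
    then have "omega a * (psi a ^ p * psi_star a ^ d * omega a ^ v) \<approx>
        psi a ^ 1 * psi_star a ^ 1 * omega a ^ Suc v"
      using right[OF omega_power_psi_psi_star[of 1]] by (simp add: mult.assoc)
    then show ?thesis by (rule cl_span_cong) (intro site_monomial_in_span; simp)
  qed
qed

lemma site_letter_mult_site_word:
  assumes "x \<in> site_letters a" "w \<in> site_basis a"
  shows "mon [x] * mon w \<in> cl_span (site_basis a)"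
proof -
  obtain p d v where "w = site_word a p d v" "p \<le> 1" "d \<le> 1"
    using assms(2) unfolding site_basis_def by blast
  then show ?thesis using assms(1)
    psi_mult_site_monomial psi_star_mult_site_monomial omega_mult_site_monomial
    by (auto simp: site_letters_def mon_site_word psi_def psi_star_def omega_def)
qed

end

lemma site_letters_skew_comm:
  assumes a: "a \<in> {1..n}" "x \<in> site_letters a" and b: "b \<in> {1..n}" "b \<noteq> a" "y \<in> site_letters b"
  shows "\<exists>\<tau>. mon [x] * mon [y] \<approx> smul \<tau> (mon [y] * mon [x])"
proof -
  have neg: "- z = smul (-1) z" for z :: "'k fa" by (simp add: smul_minus_left)
  have ab: "a \<noteq> b" using b by simp
  from a(2) b(3) show ?thesis unfolding site_letters_def
  proof (elim insertE emptyE)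
    assume "x = Psi a" "y = Psi b"
    then show ?thesis using psi_anticomm[OF a(1) b(1)] by (metis psi_def neg)
  next
    assume "x = Psi a" "y = PsiS b"
    then show ?thesis
      using psi_psi_star_anticomm[OF a(1) b(1) ab] by (metis psi_def psi_star_def neg)
  next
    assume "x = Psi a" "y = Om b"
    then show ?thesis
      using cong_sym[OF omega_psi[OF b(1) a(1)]] b by (metis psi_def omega_def smul_one)
  next
    assume "x = PsiS a" "y = Psi b"
    then show ?thesis using cong_neg_swap[OF psi_psi_star_anticomm[OF b(1) a(1)]] b
      by (metis psi_def psi_star_def neg)
  next
    assume "x = PsiS a" "y = PsiS b"
    then show ?thesis using psi_star_anticomm[OF a(1) b(1)] by (metis psi_star_def neg)
  next
    assume "x = PsiS a" "y = Om b"
    then show ?thesis using cong_sym[OF omega_psi_star[OF b(1) a(1)]] b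
      by (metis psi_star_def omega_def smul_one)
  next
    assume "x = Om a" "y = Psi b"
    then show ?thesis using omega_psi[OF a(1) b(1)] ab by (metis psi_def omega_def)
  next
    assume "x = Om a" "y = PsiS b"
    then show ?thesis using omega_psi_star[OF a(1) b(1)] ab by (metis psi_star_def omega_def)
  next
    assume "x = Om a" "y = Om b"
    then show ?thesis using omega_comm[OF a(1) b(1)] by (metis omega_def smul_one)
  qed
qed

lemma site_letter_skew_comm_word:
  assumes a: "a \<in> {1..n}" "x \<in> site_letters a"
    and u: "set u \<subseteq> (\<Union>b\<in>{1..n} - {a}. site_letters b)"
  shows "\<exists>\<tau>. mon [x] * mon u \<approx> smul \<tau> (mon u * mon [x])"
  using u
proof (induction u)
  case Nil
  then show ?case by (intro exI[of _ 1]) (simp add: mon_Nil)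
next
  case (Cons y u)
  from Cons.prems have "y \<in> (\<Union>b\<in>{1..n} - {a}. site_letters b)" by simp
  then obtain b where b: "b \<in> {1..n}" "b \<noteq> a" "y \<in> site_letters b" by blast
  from Cons.prems have u': "set u \<subseteq> (\<Union>b\<in>{1..n} - {a}. site_letters b)" by simp
  obtain \<tau>2 where t2: "mon [x] * mon u \<approx> smul \<tau>2 (mon u * mon [x])" using Cons.IH[OF u'] by blast
  obtain \<tau>1 where t1: "mon [x] * mon [y] \<approx> smul \<tau>1 (mon [y] * mon [x])"
    using site_letters_skew_comm[OF a b] by blast
  have "set (y # u) \<subseteq> L" using Cons.prems site_letters_union_subset[of "{1..n} - {a}"] by auto
  then have y: "mon [y] \<in> word_alg" and u: "mon u \<in> word_alg" by (auto intro: word_alg_mon)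
  have "mon [x] * mon (y # u) = (mon [x] * mon [y]) * mon u"
    by (simp add: mon_Cons[of y u] mult.assoc)
  also have "\<dots> \<approx> smul \<tau>1 (mon [y] * mon [x]) * mon u" by (rule cong_mult_right[OF u t1])
  also have "\<dots> = smul \<tau>1 (mon [y] * (mon [x] * mon u))" by (simp add: mult.assoc)
  also have "\<dots> \<approx> smul \<tau>1 (mon [y] * smul \<tau>2 (mon u * mon [x]))"
    by (intro cong_smul cong_mult_left[OF y t2])
  also have "\<dots> = smul (\<tau>1 * \<tau>2) (mon (y # u) * mon [x])" by (simp add: mon_Cons[of y u] mult.assoc)
  finally show ?case by blast
qed

abbreviation "BW \<equiv> cl_basis_words n k"

lemma basis_word_letters: "w \<in> BW \<Longrightarrow> set w \<subseteq> L"
proof -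
  assume "w \<in> BW"
  then obtain p d v where "w = cl_monomial_word n p d v" unfolding cl_basis_words_def by blast
  then show ?thesis
    using set_cl_monomial_word[of n p d v] site_letters_union_subset[of "{1..n}"] by auto
qed

lemma basis_word_replace_site:
  assumes a: "a \<in> {1..n}"
    and val: "\<forall>b\<in>{1..n}. p b \<in> {0, 1} \<and> d b \<in> {0, 1} \<and> v b \<in> {0..<2*k}"
    and u: "u \<in> site_basis a"
  shows "cl_monomial_prefix p d v a @ u @ cl_monomial_suffix n p d v a \<in> BW"
proof -
  obtain p' d' v' where u: "u = site_word a p' d' v'" "p' \<le> 1" "d' \<le> 1" "v' < 2 * k"
    using u unfolding site_basis_def by blast
  have "cl_monomial_prefix p d v a @ u @ cl_monomial_suffix n p d v a =
      cl_monomial_word n (p(a := p')) (d(a := d')) (v(a := v'))"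
    using cl_monomial_word_update[OF a] u by simp
  moreover have "\<forall>b\<in>{1..n}. (p(a := p')) b \<in> {0, 1} \<and> (d(a := d')) b \<in> {0, 1} \<and>
      (v(a := v')) b \<in> {0..<2*k}"
    using val u by auto
  ultimately show ?thesis unfolding cl_basis_words_def by blast
qed

text \<open>Left multiplication by a letter of site \<open>a\<close> only changes the \<open>a\<close>-th factor of
  a basis word, up to the scalar picked up by moving the letter past the earlier sites.\<close>
lemma site_letter_mult_basis_word:
  assumes a: "a \<in> {1..n}" and x: "x \<in> site_letters a" and w: "w \<in> BW"
  shows "mon [x] * mon w \<in> cl_span BW"
proof -
  obtain p d v where w: "w = cl_monomial_word n p d v"
    and val: "\<forall>b\<in>{1..n}. p b \<in> {0, 1} \<and> d b \<in> {0, 1} \<and> v b \<in> {0..<2*k}"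
    using w unfolding cl_basis_words_def by blast
  let ?pre = "cl_monomial_prefix p d v a" and ?suf = "cl_monomial_suffix n p d v a"
  let ?c = "site_word a (p a) (d a) (v a)"
  have pre: "set ?pre \<subseteq> (\<Union>b\<in>{1..n} - {a}. site_letters b)"
    by (rule order.trans[OF set_cl_monomial_prefix UN_mono]) (use a in auto)
  then have pre_L: "set ?pre \<subseteq> L" using site_letters_union_subset[of "{1..n} - {a}"] by blast
  have suf_L: "set ?suf \<subseteq> L"
    by (rule order.trans[OF set_cl_monomial_suffix site_letters_union_subset]) (use a in auto)
  have c_L: "set ?c \<subseteq> L" by (rule order.trans[OF set_site_word site_letters_subset[OF a]])
  obtain \<tau> where t: "mon [x] * mon ?pre \<approx> smul \<tau> (mon ?pre * mon [x])"
    using site_letter_skew_comm_word[OF a x pre] by blast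
  have "p a \<in> {0, 1} \<and> d a \<in> {0, 1} \<and> v a \<in> {0..<2*k}" using val a by blast
  then have "p a \<le> 1" "d a \<le> 1" "v a < 2 * k" by auto
  then have "?c \<in> site_basis a" unfolding site_basis_def by blast
  then have site: "mon [x] * mon ?c \<in> cl_span (site_basis a)"
    by (rule site_letter_mult_site_word[OF a x])
  have update: "?pre @ u @ ?suf \<in> BW" if "u \<in> site_basis a" for u
    using basis_word_replace_site[OF a val that] .
  have "mon [x] * mon w = (mon [x] * mon ?pre) * (mon ?c * mon ?suf)"
    by (simp add: w cl_monomial_word_split[OF a] mon_append mult.assoc)
  also have "\<dots> \<approx> smul \<tau> (mon ?pre * mon [x]) * (mon ?c * mon ?suf)"
    using c_L suf_L by (intro cong_mult_right[OF _ t] word_alg_mult word_alg_mon)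
  also have "\<dots> = smul \<tau> (mon ?pre * (mon [x] * mon ?c) * mon ?suf)" by (simp add: mult.assoc)
  finally show ?thesis
    by (rule cl_span_cong) (intro cl_span_smul cl_span_mon_mult_mon[OF site update pre_L suf_L])
qed

definition span_stable :: "'k fa \<Rightarrow> bool" where
  "span_stable y \<longleftrightarrow> (\<forall>z\<in>cl_span BW. y * z \<in> cl_span BW)"

lemma span_stable_mult: "span_stable y1 \<Longrightarrow> span_stable y2 \<Longrightarrow> span_stable (y1 * y2)"
  unfolding span_stable_def by (simp add: mult.assoc)

lemma span_stable_smul: "span_stable y \<Longrightarrow> span_stable (smul c y)"
  unfolding span_stable_def by (simp add: cl_span_smul)

lemma span_stable_diff: "span_stable y1 \<Longrightarrow> span_stable y2 \<Longrightarrow> span_stable (y1 - y2)"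
  unfolding span_stable_def by (simp add: left_diff_distrib cl_span_diff)

lemma span_stable_power: "span_stable y \<Longrightarrow> span_stable (y ^ m)"
  by (induction m) (simp_all add: span_stable_def[of 1] span_stable_mult)

lemma cl_span_basis_words_rep:
  assumes "z \<in> cl_span BW"
  obtains Z where "z \<approx> Z" "Z \<in> word_alg" "Z \<in> cl_span BW"
proof -
  obtain S c where S: "finite S" "S \<subseteq> BW" "z \<approx> (\<Sum>w\<in>S. smul (c w) (mon w))"
    using assms by (rule cl_spanE)
  show thesis
  proof (rule that[OF S(3)])
    show "(\<Sum>w\<in>S. smul (c w) (mon w)) \<in> word_alg"
      using S basis_word_letters by (intro word_alg_sum word_alg_smul word_alg_mon) auto
    show "(\<Sum>w\<in>S. smul (c w) (mon w)) \<in> cl_span BW"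
      using S by (intro cl_span_sum cl_span_smul cl_span_mon) auto
  qed
qed

lemma span_stableI:
  assumes y: "y \<in> word_alg" and basis: "\<And>w. w \<in> BW \<Longrightarrow> y * mon w \<in> cl_span BW"
  shows "span_stable y"
  unfolding span_stable_def
proof
  fix z assume "z \<in> cl_span BW"
  then obtain S c where S: "finite S" "S \<subseteq> BW" "z \<approx> (\<Sum>w\<in>S. smul (c w) (mon w))"
    by (rule cl_spanE)
  have "y * z \<approx> (\<Sum>w\<in>S. smul (c w) (y * mon w))"
    using cong_mult_left[OF y S(3)] by (simp add: sum_distrib_left)
  then show "y * z \<in> cl_span BW"
    by (rule cl_span_cong) (use S basis in \<open>auto intro!: cl_span_sum cl_span_smul\<close>)
qed

lemma span_stable_cong:
  assumes "y \<approx> y'" "y \<in> word_alg" "span_stable y'"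
  shows "span_stable y"
  unfolding span_stable_def
proof
  fix z assume "z \<in> cl_span BW"
  then obtain Z where Z: "z \<approx> Z" "Z \<in> word_alg" "Z \<in> cl_span BW"
    by (rule cl_span_basis_words_rep)
  have "y * z \<approx> y' * Z"
    using cong_mult_left[OF assms(2) Z(1)] cong_mult_right[OF Z(2) assms(1)] by (rule cong_trans)
  then show "y * z \<in> cl_span BW"
    by (rule cl_span_cong) (use assms(3) Z(3) in \<open>simp add: span_stable_def\<close>)
qed

lemma span_stable_letter:
  assumes "x \<in> L"
  shows "span_stable (mon [x])"
proof -
  obtain a where a: "a \<in> {1..n}" and "x \<in> {Psi a, PsiS a, Om a, OmInv a}"
    using assms unfolding cl_letters_def by blast
  then have x: "x \<in> site_letters a \<or> x = OmInv a" by (auto simp: site_letters_def)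
  have site: "span_stable (mon [y])" if "y \<in> site_letters a" for y
    using that site_letters_subset[OF a] site_letter_mult_basis_word[OF a that]
    by (intro span_stableI word_alg_mon) auto
  then have "span_stable (psi a)" "span_stable (psi_star a)" "span_stable (omega a)"
    by (simp_all add: site_letters_def psi_def psi_star_def omega_def)
  then have "span_stable (omega_inv a)"
    by (intro span_stable_cong[OF omega_inv_expand[OF a]] generators_word_alg[OF a]
        span_stable_diff span_stable_smul span_stable_mult span_stable_power)
  then show ?thesis using x site by (auto simp: omega_inv_def)
qed

lemma Nil_basis_word: "[] \<in> BW"
proof -
  have "cl_monomial_word n (\<lambda>_. 0) (\<lambda>_. 0) (\<lambda>_. 0) = []" by (simp add: cl_monomial_word_def)
  moreover have "\<forall>a\<in>{1..n}. (0::nat) \<in> {0, 1} \<and> (0::nat) \<in> {0, 1} \<and> (0::nat) \<in> {0..<2*k}"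
    using k_pos by auto
  ultimately show ?thesis unfolding cl_basis_words_def by (intro CollectI exI[of _ "\<lambda>_. 0"]) auto
qed

lemma mon_in_cl_span: "set w \<subseteq> L \<Longrightarrow> mon w \<in> cl_span BW"
proof (induction w)
  case Nil
  then show ?case using cl_span_mon[OF Nil_basis_word] by simp
next
  case (Cons x w)
  then have "span_stable (mon [x])" "mon w \<in> cl_span BW" by (auto intro: span_stable_letter)
  then show ?case unfolding span_stable_def by (simp add: mon_Cons[of x w])
qed

theorem spanning:
  assumes f: "f \<in> free_alg L"
  shows "\<exists>S c. finite S \<and> S \<subseteq> BW \<and> fa_sub f (\<lambda>u. \<Sum>w\<in>S. c w * fa_mono w u) \<in> cl_ideal n k q"
proof -
  have fin: "finite {w. f w \<noteq> 0}" and letters: "\<And>w. f w \<noteq> 0 \<Longrightarrow> set w \<subseteq> L"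
    using f unfolding free_alg_def by auto
  have "Abs_fa f \<in> cl_span BW"
    unfolding Abs_fa_finite_support[OF fin]
    using letters by (intro cl_span_sum cl_span_smul mon_in_cl_span) auto
  then obtain S c where S: "finite S" "S \<subseteq> BW" "Abs_fa f \<approx> (\<Sum>w\<in>S. smul (c w) (mon w))"
    by (rule cl_spanE)
  have "Rep_fa (Abs_fa f - (\<Sum>w\<in>S. smul (c w) (mon w))) = fa_sub f (\<lambda>u. \<Sum>w\<in>S. c w * fa_mono w u)"
    by (simp add: Rep_fa_ops Rep_fa_sum Rep_fa_smul Rep_fa_mon Abs_fa_inverse fa_sub_def)
  then show ?thesis using S unfolding cl_cong_def in_ideal_def by auto
qed

end

section \<open>A representation on functions of states\<close>

text \<open>A one-site state is a pair \<open>(c, v)\<close> of a label and an exponent \<open>v < 2 * k\<close>;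
  larger exponents are junk, on which every operator below vanishes. Applied to the
  one-site vacuum, the monomials \<open>omega ^ v\<close>, \<open>psi * omega ^ v\<close>, \<open>psi_star * omega ^ v\<close>
  and \<open>psi * psi_star * omega ^ v\<close> give the indicators of \<open>{(cE, v), (cF, v)}\<close>,
  \<open>{(cP, v)}\<close>, \<open>{(cS, v)}\<close> and \<open>{(cE, shift_k v)}\<close>, so \<open>cP\<close> and \<open>cS\<close> are the
  odd labels.\<close>
datatype site_label = cE | cF | cP | cS

datatype letter_kind = KP | KS | KW | KV

context quantum_clifford
begin

definition omega_weight :: "site_label \<Rightarrow> 'k" where
  "omega_weight c =
      (case c of cE \<Rightarrow> 1 | cF \<Rightarrow> 1 | cP \<Rightarrow> q | cS \<Rightarrow>
      inverse q)"

definition wrap_weight :: "site_label \<Rightarrow> 'k" where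
  "wrap_weight c =
     (case c of cE \<Rightarrow> 1 | cF \<Rightarrow> inverse (q ^ (2 * k)) | cP \<Rightarrow>
       inverse (q ^ (2 * k)) | cS \<Rightarrow> 1)"

definition pred_mod :: "nat \<Rightarrow> nat" where
  "pred_mod v = (if v = 0 then 2 * k - 1 else v - 1)"

definition succ_mod :: "nat \<Rightarrow> nat" where
  "succ_mod v = (if v = 2 * k - 1 then 0 else v + 1)"

definition shift_k :: "nat \<Rightarrow> nat" where
  "shift_k v = (v + k) mod (2 * k)"

fun site_coeff :: "letter_kind \<Rightarrow> site_label \<times> nat \<Rightarrow> 'k" where
  "site_coeff KW (c, v) =
     (if v < 2 * k then omega_weight c * (if v = 0 then wrap_weight c else 1) else 0)"
| "site_coeff KV (c, v) =
     (if v < 2 * k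
      then inverse (omega_weight c) * (if v = 2 * k - 1 then inverse (wrap_weight c) else 1)
      else 0)"
| "site_coeff KP (c, v) = (if v < 2 * k \<and> (c = cP \<or> c = cE) then 1 else 0)"
| "site_coeff KS (c, v) =
     (if v < 2 * k \<and> c = cS then 1
      else if v < 2 * k \<and> c = cF then (if k \<le> v then q ^ k else inverse (q ^ k))
      else 0)"

fun site_source ::
  "letter_kind \<Rightarrow> site_label \<times> nat \<Rightarrow> site_label \<times> nat" where
  "site_source KW (c, v) = (c, pred_mod v)"
| "site_source KV (c, v) = (c, succ_mod v)"
| "site_source KP (c, v) = (if c = cP then (cF, v) else (cS, shift_k v))"
| "site_source KS (c, v) = (if c = cS then (cE, v) else (cP, shift_k v))"

definition site_op ::
  "letter_kind \<Rightarrow> (site_label \<times> nat \<Rightarrow> 'k) \<Rightarrow> site_label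
  \<times> nat \<Rightarrow> 'k" where
  "site_op \<kappa> h s = site_coeff \<kappa> s * h (site_source \<kappa> s)"

lemma omega_weight_nz: "omega_weight c \<noteq> 0"
  using q_nz by (cases c) (auto simp: omega_weight_def)

lemma wrap_weight_nz: "wrap_weight c \<noteq> 0"
  using q_nz by (cases c) (auto simp: wrap_weight_def)

lemma k_less_double: "k < 2 * k"
  using k_pos by simp

lemma pred_mod_lt: "v < 2 * k \<Longrightarrow> pred_mod v < 2 * k"
  using k_pos by (auto simp: pred_mod_def)

lemma succ_mod_lt: "v < 2 * k \<Longrightarrow> succ_mod v < 2 * k"
  using k_pos by (auto simp: succ_mod_def)

lemma shift_k_lt: "shift_k v < 2 * k"
  using k_pos by (auto simp: shift_k_def)

lemma succ_mod_pred_mod: "v < 2 * k \<Longrightarrow> succ_mod (pred_mod v) = v"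
  using k_pos by (auto simp: pred_mod_def succ_mod_def)

lemma pred_mod_succ_mod: "v < 2 * k \<Longrightarrow> pred_mod (succ_mod v) = v"
  using k_pos by (auto simp: pred_mod_def succ_mod_def)

lemma shift_k_cases: "v < 2 * k \<Longrightarrow> shift_k v = (if v < k then v + k else v - k)"
  using k_pos by (auto simp: shift_k_def mod_if)

lemma pred_mod_shift_k: "v < 2 * k \<Longrightarrow> pred_mod (shift_k v) = shift_k (pred_mod v)"
  using k_pos by (auto simp: shift_k_cases pred_mod_lt pred_mod_def)

lemma shift_k_shift_k: "v < 2 * k \<Longrightarrow> shift_k (shift_k v) = v"
  using k_pos by (auto simp: shift_k_cases shift_k_lt)

lemma site_op_scale: "site_op \<kappa> (\<lambda>s. c * h s) s = c * site_op \<kappa> h s"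
  by (simp add: site_op_def)

lemma site_coeff_out_of_range: "\<not> snd s < 2 * k \<Longrightarrow> site_coeff \<kappa> s = 0"
  by (cases s; cases \<kappa>) auto

lemma site_op_out_of_range: "\<not> snd s < 2 * k \<Longrightarrow> site_op \<kappa> h s = 0"
  by (simp add: site_op_def site_coeff_out_of_range)

lemma site_op_omega_omega_inv: "snd s < 2 * k \<Longrightarrow> site_op KW (site_op KV h) s = h s"
  using omega_weight_nz wrap_weight_nz pred_mod_lt succ_mod_pred_mod k_pos
  by (cases s) (auto simp: site_op_def pred_mod_def field_simps)

lemma site_op_omega_inv_omega: "snd s < 2 * k \<Longrightarrow> site_op KV (site_op KW h) s = h s"
  using omega_weight_nz wrap_weight_nz succ_mod_lt pred_mod_succ_mod k_pos
  by (cases s) (auto simp: site_op_def succ_mod_def field_simps)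

lemma site_op_psi_psi: "site_op KP (site_op KP h) s = 0"
  by (cases s) (auto simp: site_op_def)

lemma site_op_psi_star_psi_star: "site_op KS (site_op KS h) s = 0"
  by (cases s) (auto simp: site_op_def)

lemma site_op_omega_psi: "site_op KW (site_op KP h) s = q * site_op KP (site_op KW h) s"
proof (cases s)
  case (Pair c v)
  show ?thesis
  proof (cases "v < 2 * k")
    case True
    then show ?thesis using Pair q_nz pred_mod_lt[OF True] shift_k_lt
      by (cases c) (auto simp: site_op_def omega_weight_def wrap_weight_def pred_mod_shift_k)
  qed (simp add: site_op_def Pair)
qed

lemma psi_star_weight_pred_mod:
  assumes v: "v < 2 * k"
  shows "(if v = 0 then inverse (q ^ (2 * k)) else 1)
      * (if k \<le> pred_mod v then q ^ k else inverse (q ^ k)) =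
    (if k \<le> v then q ^ k else inverse (q ^ k)) * (if shift_k v = 0 then inverse (q ^ (2 * k))
      else 1)"
proof -
  have e: "q ^ (2 * k) = q ^ k * q ^ k" by (rule power_double)
  consider "v = 0" | "0 < v" "v < k" | "v = k" | "k < v" by linarith
  then show ?thesis
  proof cases
    case 1
    have "k \<le> pred_mod v" using 1 k_pos by (simp add: pred_mod_def)
    moreover have "shift_k v \<noteq> 0" using 1 k_pos by (simp add: shift_k_def)
    ultimately show ?thesis unfolding e using q_nz 1 by (simp add: field_simps)
  next
    case 2
    then have "\<not> k \<le> pred_mod v" by (simp add: pred_mod_def)
    then show ?thesis using 2 v by (simp add: shift_k_cases)
  next
    case 3
    have "\<not> k \<le> pred_mod v" using 3 k_pos by (simp add: pred_mod_def)
    moreover have "shift_k v = 0" using 3 k_pos by (simp add: shift_k_def mult_2)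
    ultimately show ?thesis unfolding e using q_nz 3 by (simp add: field_simps)
  next
    case 4
    then have "k \<le> pred_mod v" by (simp add: pred_mod_def)
    then show ?thesis using 4 v by (simp add: shift_k_cases)
  qed
qed

lemma site_op_omega_psi_star:
  "site_op KW (site_op KS h) s = inverse q * site_op KS (site_op KW h) s"
proof (cases s)
  case (Pair c v)
  show ?thesis
  proof (cases "v < 2 * k")
    case v: True
    show ?thesis
    proof (cases c)
      case cF
      have "site_op KW (site_op KS h) s =
          (if v = 0 then inverse (q ^ (2 * k)) else 1) *
          (if k \<le> pred_mod v then q ^ k else inverse (q ^ k)) * h (cP, shift_k (pred_mod v))"
        using Pair cF v pred_mod_lt[OF v]
        by (simp add: site_op_def omega_weight_def wrap_weight_def)
      also have "\<dots> = (if k \<le> v then q ^ k else inverse (q ^ k)) *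
          (if shift_k v = 0 then inverse (q ^ (2 * k)) else 1) * h (cP, pred_mod (shift_k v))"
        using psi_star_weight_pred_mod[OF v] pred_mod_shift_k[OF v] by simp
      also have "\<dots> = inverse q * site_op KS (site_op KW h) s"
        using Pair cF v shift_k_lt q_nz by (simp add: site_op_def omega_weight_def wrap_weight_def)
      finally show ?thesis .
    qed (use Pair v pred_mod_lt[OF v] q_nz in
      \<open>auto simp: site_op_def omega_weight_def wrap_weight_def\<close>)
  qed (simp add: site_op_def Pair)
qed

lemma site_op_omega_power:
  "j < 2 * k \<Longrightarrow> v < 2 * k \<Longrightarrow> (site_op KW ^^ j) h (c, v) =
    omega_weight c ^ j * (if j \<le> v then 1 else wrap_weight c) * h (c, (v + 2 * k - j) mod (2 * k))"
proof (induction j arbitrary: v)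
  case (Suc j)
  have IH: "(site_op KW ^^ j) h (c, pred_mod v) =
      omega_weight c ^ j * (if j \<le> pred_mod v then 1 else wrap_weight c) *
      h (c, (pred_mod v + 2 * k - j) mod (2 * k))"
    using Suc.IH Suc.prems pred_mod_lt by simp
  have "(site_op KW ^^ Suc j) h (c, v) =
      omega_weight c * (if v = 0 then wrap_weight c else 1) * (site_op KW ^^ j) h (c, pred_mod v)"
    using Suc.prems by (simp add: site_op_def)
  also have "\<dots> = omega_weight c ^ Suc j * (if Suc j \<le> v then 1 else wrap_weight c) *
      h (c, (v + 2 * k - Suc j) mod (2 * k))"
  proof (cases "v = 0")
    case True
    have "(pred_mod v + 2 * k - j) mod (2 * k) = (v + 2 * k - Suc j) mod (2 * k)"
    proof -
      have "pred_mod v + 2 * k - j = (2 * k - 1 - j) + 2 * k"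
        using True Suc.prems by (simp add: pred_mod_def)
      moreover have "v + 2 * k - Suc j = 2 * k - 1 - j" using True by simp
      ultimately show ?thesis by simp
    qed
    moreover have "j \<le> 2 * k - 1" using Suc.prems by simp
    ultimately show ?thesis unfolding IH using True Suc.prems by (simp add: pred_mod_def)
  next
    case False
    have "pred_mod v + 2 * k - j = v + 2 * k - Suc j" using False by (simp add: pred_mod_def)
    moreover have "(j \<le> pred_mod v) = (Suc j \<le> v)" using False by (simp add: pred_mod_def) arith
    ultimately show ?thesis unfolding IH using False by (simp add: pred_mod_def)
  qed
  finally show ?case .
qed simp

lemma site_op_omega_inv_power:
  "j < 2 * k \<Longrightarrow> v < 2 * k \<Longrightarrow> (site_op KV ^^ j) h (c, v) =
    inverse (omega_weight c) ^ j * (if v + j < 2 * k then 1 else inverse (wrap_weight c)) *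
    h (c, (v + j) mod (2 * k))"
proof (induction j arbitrary: v)
  case (Suc j)
  have IH: "(site_op KV ^^ j) h (c, succ_mod v) =
      inverse (omega_weight c) ^ j *
      (if succ_mod v + j < 2 * k then 1 else inverse (wrap_weight c)) *
      h (c, (succ_mod v + j) mod (2 * k))"
    using Suc.IH Suc.prems succ_mod_lt by simp
  have "(site_op KV ^^ Suc j) h (c, v) =
      inverse (omega_weight c) * (if v = 2 * k - 1 then inverse (wrap_weight c) else 1) *
      (site_op KV ^^ j) h (c, succ_mod v)"
    using Suc.prems by (simp add: site_op_def)
  also have "\<dots> = inverse (omega_weight c) ^ Suc j *
      (if v + Suc j < 2 * k then 1 else inverse (wrap_weight c)) * h (c, (v + Suc j) mod (2 * k))"
  proof (cases "v = 2 * k - 1")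
    case True
    have "(succ_mod v + j) mod (2 * k) = (v + Suc j) mod (2 * k)"
    proof -
      have "v + Suc j = j + 2 * k" using True Suc.prems by simp
      then show ?thesis using True by (simp add: succ_mod_def)
    qed
    then show ?thesis unfolding IH using True Suc.prems by (simp add: succ_mod_def)
  next
    case False
    have "succ_mod v + j = v + Suc j" using False by (simp add: succ_mod_def)
    then show ?thesis unfolding IH using False by (simp add: succ_mod_def)
  qed
  finally show ?case .
qed simp

lemma site_op_power_out_of_range: "0 < j \<Longrightarrow> \<not> snd s < 2 * k \<Longrightarrow> (site_op \<kappa> ^^ j) h s = 0"
  by (cases j) (simp_all add: site_op_out_of_range)

lemma site_op_psi_psi_star_omega_inv:
  "site_op KP (site_op KS h) s + q ^ k * site_op KS (site_op KP h) s = (site_op KV ^^ k) h s"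
proof (cases s)
  case (Pair c v)
  show ?thesis
  proof (cases "v < 2 * k")
    case True
    have e: "q ^ (2 * k) = q ^ k * q ^ k" by (rule power_double)
    have R: "(site_op KV ^^ k) h s =
        inverse (omega_weight c) ^ k * (if v < k then 1 else inverse (wrap_weight c)) *
        h (c, shift_k v)"
      using site_op_omega_inv_power[OF k_less_double True] Pair by (simp add: shift_k_def)
    have kv: "(k \<le> v) = (\<not> v < k)" by auto
    show ?thesis unfolding R using Pair True q_nz shift_k_lt
      by (cases c) (auto simp: site_op_def omega_weight_def wrap_weight_def e power_inverse kv)
  next
    case False
    then show ?thesis
      using Pair k_pos site_op_power_out_of_range[of k "(c, v)"] by (simp add: site_op_def)
  qed
qed

lemma site_op_psi_psi_star_omega:
  "site_op KP (site_op KS h) s + inverse (q ^ k) * site_op KS (site_op KP h) s =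
    (site_op KW ^^ k) h s"
proof (cases s)
  case (Pair c v)
  show ?thesis
  proof (cases "v < 2 * k")
    case True
    have e: "q ^ (2 * k) = q ^ k * q ^ k" by (rule power_double)
    have m: "(v + 2 * k - k) mod (2 * k) = shift_k v" by (simp add: shift_k_def mult_2)
    have R: "(site_op KW ^^ k) h s =
        omega_weight c ^ k * (if k \<le> v then 1 else wrap_weight c) * h (c, shift_k v)"
      using site_op_omega_power[OF k_less_double True] Pair m by simp
    show ?thesis unfolding R using Pair True q_nz shift_k_lt
      by (cases c) (auto simp: site_op_def omega_weight_def wrap_weight_def e power_inverse)
  next
    case False
    then show ?thesis
      using Pair k_pos site_op_power_out_of_range[of k "(c, v)"] by (simp add: site_op_def)
  qed
qed

end

type_synonym state = "nat \<Rightarrow> site_label \<times> nat"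

fun kind :: "cgen \<Rightarrow> letter_kind" where
  "kind (Psi a) = KP" | "kind (PsiS a) = KS" | "kind (Om a) = KW" | "kind (OmInv a) = KV"

fun site :: "cgen \<Rightarrow> nat" where
  "site (Psi a) = a" | "site (PsiS a) = a" | "site (Om a) = a" | "site (OmInv a) = a"

definition odd_label :: "site_label \<Rightarrow> bool" where
  "odd_label c \<longleftrightarrow> c = cP \<or> c = cS"

definition odd_kind :: "letter_kind \<Rightarrow> bool" where
  "odd_kind \<kappa> \<longleftrightarrow> \<kappa> = KP \<or> \<kappa> = KS"

lemma odd_kind_simps [simp]: "odd_kind KP" "odd_kind KS" "\<not> odd_kind KW" "\<not> odd_kind KV"
  by (simp_all add: odd_kind_def)

text \<open>The Jordan--Wigner sign: an odd letter at site \<open>a\<close> anticommutes past every site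
  \<open>b < a\<close> carrying an odd label. This makes letters of different sites commute or
  anticommute as in \<open>Cl_q(n, k)\<close>.\<close>
definition koszul_sign :: "nat \<Rightarrow> state \<Rightarrow> 'k::field" where
  "koszul_sign a t = (-1) ^ card {b\<in>{1..<a}. odd_label (fst (t b))}"

definition letter_sign :: "cgen \<Rightarrow> state \<Rightarrow> 'k::field" where
  "letter_sign x t = (if odd_kind (kind x) then koszul_sign (site x) t else 1)"

lemma koszul_sign_update_same: "koszul_sign a (t(a := s)) = koszul_sign a t"
  unfolding koszul_sign_def by (rule arg_cong[where f = "\<lambda>A. (-1) ^ card A"]) auto

lemma letter_sign_update_same: "letter_sign x (t(site x := s)) = letter_sign x t"
  by (simp add: letter_sign_def koszul_sign_update_same)

lemma koszul_sign_square: "koszul_sign a t * koszul_sign a t = (1::'k::field)"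
  by (simp add: koszul_sign_def flip: power_add)

lemma koszul_sign_update:
  assumes "b \<noteq> a"
  shows "koszul_sign a (t(b := s)) =
    (if 1 \<le> b \<and> b < a \<and> odd_label (fst s) \<noteq> odd_label (fst (t b))
     then - koszul_sign a t else (koszul_sign a t :: 'k::field))"
proof -
  let ?A = "{x\<in>{1..<a}. odd_label (fst (t x))}"
    and ?A' = "{x\<in>{1..<a}. odd_label (fst ((t(b := s)) x))}"
  show ?thesis
  proof (cases "1 \<le> b \<and> b < a \<and> odd_label (fst s) \<noteq> odd_label (fst (t b))")
    case False
    then have "?A' = ?A" using assms by auto
    then have "koszul_sign a (t(b := s)) = (koszul_sign a t :: 'k)" by (simp add: koszul_sign_def)
    then show ?thesis by (subst if_not_P[OF False])
  next
    case True
    show ?thesis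
    proof (cases "odd_label (fst s)")
      case odd: True
      then have "?A' = insert b ?A" "b \<notin> ?A" using True by auto
      then have "card ?A' = Suc (card ?A)" by simp
      then show ?thesis using True by (simp add: koszul_sign_def)
    next
      case even: False
      then have "?A = insert b ?A'" "b \<notin> ?A'" using True by auto
      then have "card ?A = Suc (card ?A')" by simp
      then show ?thesis using True by (simp add: koszul_sign_def)
    qed
  qed
qed

context quantum_clifford
begin

definition letter_op :: "cgen \<Rightarrow> (state \<Rightarrow> 'k) \<Rightarrow> state \<Rightarrow> 'k" where
  "letter_op x F t =
     letter_sign x t * site_coeff (kind x) (t (site x)) *
     F (t(site x := site_source (kind x) (t (site x))))"

lemma odd_label_site_source:
  "site_coeff \<kappa> s \<noteq> 0 \<Longrightarrow> odd_label (fst (site_source \<kappa> s)) \<longleftrightarrow> odd_label (fst s) \<noteq> odd_kind \<kappa>"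
  by (cases s; cases \<kappa>) (auto simp: odd_label_def odd_kind_def split: if_splits)

lemma letter_sign_update:
  assumes "site z \<noteq> site x" "1 \<le> site z" "site_coeff (kind z) s \<noteq> 0" "s = t (site z)"
  shows "letter_sign x (t(site z := site_source (kind z) s)) =
    (if odd_kind (kind x) \<and> odd_kind (kind z) \<and> site z < site x
     then - letter_sign x t else letter_sign x t)"
  using koszul_sign_update[OF assms(1), of t "site_source (kind z) s"]
    odd_label_site_source[OF assms(3)] assms
  by (auto simp: letter_sign_def)

lemma letter_op_swap:
  assumes "site x \<noteq> site y" "1 \<le> site x" "1 \<le> site y"
  shows "letter_op x (letter_op y F) t =
    (if odd_kind (kind x) \<and> odd_kind (kind y) then -1 else 1) * letter_op y (letter_op x F) t"
proof -
  define a b sa sb where "a = site x" and "b = site y" and "sa = t a" and "sb = t b"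
  have ab: "a \<noteq> b" using assms a_def b_def by simp
  let ?t' = "t(a := site_source (kind x) sa, b := site_source (kind y) sb)"
  have twist: "?t' = t(b := site_source (kind y) sb, a := site_source (kind x) sa)"
    using ab by (rule fun_upd_twist)
  have L: "letter_op x (letter_op y F) t = letter_sign x t * site_coeff (kind x) sa *
      (letter_sign y (t(a := site_source (kind x) sa)) * site_coeff (kind y) sb * F ?t')"
    using ab by (simp add: letter_op_def a_def b_def sa_def sb_def)
  have R: "letter_op y (letter_op x F) t = letter_sign y t * site_coeff (kind y) sb *
      (letter_sign x (t(b := site_source (kind y) sb)) * site_coeff (kind x) sa * F ?t')"
    using ab twist by (simp add: letter_op_def a_def b_def sa_def sb_def)
  show ?thesis
  proof (cases "site_coeff (kind x) sa = 0 \<or> site_coeff (kind y) sb = 0")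
    case True
    then show ?thesis unfolding L R by auto
  next
    case False
    have s1: "letter_sign y (t(a := site_source (kind x) sa)) =
        (if odd_kind (kind y) \<and> odd_kind (kind x) \<and> a < b
         then - letter_sign y t else letter_sign y t)"
      using letter_sign_update[of x y sa t] False assms by (simp add: a_def b_def sa_def)
    have s2: "letter_sign x (t(b := site_source (kind y) sb)) =
        (if odd_kind (kind x) \<and> odd_kind (kind y) \<and> b < a
         then - letter_sign x t else letter_sign x t)"
      using letter_sign_update[of y x sb t] False assms by (simp add: a_def b_def sb_def)
    show ?thesis unfolding L R s1 s2 using ab by (cases "a < b") (auto simp: algebra_simps)
  qed
qed

lemma letter_op_update:
  "site x = a \<Longrightarrow>
    letter_op x F (t(a := s)) = letter_sign x t * site_op (kind x) (\<lambda>s'. F (t(a := s'))) s"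
  by (auto simp: letter_op_def site_op_def letter_sign_update_same mult.assoc)

lemma letter_op_same_site:
  assumes "site x = a" "site y = a"
  shows "letter_op x (letter_op y F) t =
    letter_sign x t * letter_sign y t *
    site_op (kind x) (site_op (kind y) (\<lambda>s. F (t(a := s)))) (t a)"
proof -
  have "letter_op x (letter_op y F) t = letter_op x (letter_op y F) (t(a := t a))" by simp
  also have "\<dots> = letter_sign x t * site_op (kind x) (\<lambda>s'. letter_op y F (t(a := s'))) (t a)"
    by (rule letter_op_update[OF assms(1)])
  also have "(\<lambda>s'. letter_op y F (t(a := s'))) =
      (\<lambda>s'. letter_sign y t * site_op (kind y) (\<lambda>s. F (t(a := s))) s')"
    using letter_op_update[OF assms(2)] by simp
  finally show ?thesis by (simp add: site_op_scale mult.assoc)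
qed

primrec word_op :: "cgen list \<Rightarrow> (state \<Rightarrow> 'k) \<Rightarrow> state \<Rightarrow> 'k" where
  "word_op [] F = F"
| "word_op (x # w) F = letter_op x (word_op w F)"

lemma word_op_append: "word_op (u @ w) F = word_op u (word_op w F)"
  by (induction u) auto

lemma word_op_replicate_even:
  assumes "site x = a" "\<not> odd_kind (kind x)"
  shows "word_op (replicate m x) F (t(a := s)) = (site_op (kind x) ^^ m) (\<lambda>s'. F (t(a := s'))) s"
proof (induction m arbitrary: s)
  case (Suc m)
  have "word_op (replicate (Suc m) x) F (t(a := s)) =
      letter_op x (word_op (replicate m x) F) (t(a := s))"
    by simp
  also have "\<dots> = site_op (kind x) (\<lambda>s'. word_op (replicate m x) F ((t(a := s))(a := s'))) s"
    using letter_op_update[OF assms(1)] assms(2) by (simp add: letter_sign_def)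
  also have "\<dots> = site_op (kind x) ((site_op (kind x) ^^ m) (\<lambda>s'. F (t(a := s')))) s"
    by (rule arg_cong[where f = "\<lambda>h. site_op (kind x) h s"])
      (rule ext, subst fun_upd_upd, rule Suc.IH)
  finally show ?case by (simp only: funpow.simps comp_apply)
qed simp

lemma letter_op_sum: "letter_op x (\<lambda>t. \<Sum>i\<in>A. F i t) t = (\<Sum>i\<in>A. letter_op x (F i) t)"
  by (simp add: letter_op_def sum_distrib_left)

lemma letter_op_scale: "letter_op x (\<lambda>t. c * F t) t = c * letter_op x F t"
  by (simp add: letter_op_def)

lemma word_op_sum: "word_op w (\<lambda>t. \<Sum>i\<in>A. F i t) = (\<lambda>t. \<Sum>i\<in>A. word_op w (F i) t)"
proof (induction w)
  case (Cons x w)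
  show ?case by (simp add: Cons.IH fun_eq_iff letter_op_sum)
qed simp

lemma word_op_scale: "word_op w (\<lambda>t. c * F t) = (\<lambda>t. c * word_op w F t)"
proof (induction w)
  case (Cons x w)
  show ?case by (simp add: Cons.IH fun_eq_iff letter_op_scale)
qed simp

lemma word_op_zero: "word_op w (\<lambda>t. 0) = (\<lambda>t. 0)"
  by (induction w) (simp_all add: letter_op_def fun_eq_iff)

definition in_range :: "state \<Rightarrow> bool" where
  "in_range t \<longleftrightarrow> (\<forall>a\<in>{1..n}. snd (t a) < 2 * k)"

definition range_supported :: "(state \<Rightarrow> 'k) \<Rightarrow> bool" where
  "range_supported G \<longleftrightarrow> (\<forall>t. \<not> in_range t \<longrightarrow> G t = 0)"

lemma range_supportedD: "a \<in> {1..n} \<Longrightarrow> range_supported G \<Longrightarrow> \<not> snd (t a) < 2 * k \<Longrightarrow> G t = 0"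
  unfolding range_supported_def in_range_def by blast

lemma range_supported_letter_op: "range_supported G \<Longrightarrow> range_supported (letter_op x G)"
  unfolding range_supported_def
proof (intro allI impI)
  fix t assume G: "\<forall>t. \<not> in_range t \<longrightarrow> G t = 0" and t: "\<not> in_range t"
  then obtain a where a: "a \<in> {1..n}" "\<not> snd (t a) < 2 * k" unfolding in_range_def by blast
  show "letter_op x G t = 0"
  proof (cases "a = site x")
    case True
    then show ?thesis using a site_coeff_out_of_range by (simp add: letter_op_def)
  next
    case False
    then have "\<not> in_range (t(site x := site_source (kind x) (t (site x))))"
      using a unfolding in_range_def by auto
    then show ?thesis using G by (simp add: letter_op_def)
  qed
qed

lemma range_supported_word_op: "range_supported G \<Longrightarrow> range_supported (word_op w G)"
  by (induction w) (simp_all add: range_supported_letter_op)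

text \<open>Only meaningful for finitely supported \<open>f\<close>: a sum over an infinite support is \<open>0\<close>.\<close>
definition fa_op :: "(cgen list \<Rightarrow> 'k) \<Rightarrow> (state \<Rightarrow> 'k) \<Rightarrow> state \<Rightarrow> 'k" where
  "fa_op f G = (\<lambda>t. \<Sum>w | f w \<noteq> 0. f w * word_op w G t)"

definition finite_support :: "(cgen list \<Rightarrow> 'k) \<Rightarrow> bool" where
  "finite_support f \<longleftrightarrow> finite {w. f w \<noteq> 0}"

lemma fa_op_superset:
  "finite A \<Longrightarrow> {w. f w \<noteq> 0} \<subseteq> A \<Longrightarrow> fa_op f G t = (\<Sum>w\<in>A. f w * word_op w G t)"
  unfolding fa_op_def by (rule sum.mono_neutral_left) auto

lemma finite_support_mono: "finite_support (fa_mono w)"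
proof -
  have "{u. fa_mono w u \<noteq> (0::'k)} = {w}" by (auto simp: fa_mono_def)
  then show ?thesis by (simp add: finite_support_def)
qed

lemma finite_support_add: "finite_support f1 \<Longrightarrow> finite_support f2 \<Longrightarrow> finite_support (fa_add f1 f2)"
  unfolding finite_support_def fa_add_def
  by (rule finite_subset[of _ "{w. f1 w \<noteq> 0} \<union> {w. f2 w \<noteq> 0}"]) auto

lemma finite_support_sub: "finite_support f1 \<Longrightarrow> finite_support f2 \<Longrightarrow> finite_support (fa_sub f1 f2)"
  unfolding finite_support_def fa_sub_def
  by (rule finite_subset[of _ "{w. f1 w \<noteq> 0} \<union> {w. f2 w \<noteq> 0}"]) auto

lemma finite_support_smult: "finite_support f \<Longrightarrow> finite_support (fa_smult c f)"
  unfolding finite_support_def fa_smult_def by (rule finite_subset[of _ "{w. f w \<noteq> 0}"]) auto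

lemma fa_op_mono: "fa_op (fa_mono w) G t = word_op w G t"
proof -
  have "{u. fa_mono w u \<noteq> (0::'k)} = {w}" by (auto simp: fa_mono_def)
  then show ?thesis by (simp add: fa_op_def fa_mono_def)
qed

lemma fa_op_add:
  assumes "finite_support f1" "finite_support f2"
  shows "fa_op (fa_add f1 f2) G t = fa_op f1 G t + fa_op f2 G t"
proof -
  let ?A = "{w. f1 w \<noteq> 0} \<union> {w. f2 w \<noteq> 0}"
  have fin: "finite ?A" using assms by (simp add: finite_support_def)
  have "fa_op (fa_add f1 f2) G t = (\<Sum>w\<in>?A. fa_add f1 f2 w * word_op w G t)"
    by (rule fa_op_superset[OF fin]) (auto simp: fa_add_def)
  also have "\<dots> = (\<Sum>w\<in>?A. f1 w * word_op w G t) + (\<Sum>w\<in>?A. f2 w * word_op w G t)"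
    by (simp add: fa_add_def distrib_right sum.distrib)
  also have "\<dots> = fa_op f1 G t + fa_op f2 G t"
    by (simp add: fa_op_superset[OF fin])
  finally show ?thesis .
qed

lemma fa_op_sub:
  assumes "finite_support f1" "finite_support f2"
  shows "fa_op (fa_sub f1 f2) G t = fa_op f1 G t - fa_op f2 G t"
proof -
  let ?A = "{w. f1 w \<noteq> 0} \<union> {w. f2 w \<noteq> 0}"
  have fin: "finite ?A" using assms by (simp add: finite_support_def)
  have "fa_op (fa_sub f1 f2) G t = (\<Sum>w\<in>?A. fa_sub f1 f2 w * word_op w G t)"
    by (rule fa_op_superset[OF fin]) (auto simp: fa_sub_def)
  also have "\<dots> = (\<Sum>w\<in>?A. f1 w * word_op w G t) - (\<Sum>w\<in>?A. f2 w * word_op w G t)"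
    by (simp add: fa_sub_def left_diff_distrib sum_subtractf)
  also have "\<dots> = fa_op f1 G t - fa_op f2 G t"
    by (simp add: fa_op_superset[OF fin])
  finally show ?thesis .
qed

lemma fa_op_smult:
  assumes "finite_support f"
  shows "fa_op (fa_smult c f) G t = c * fa_op f G t"
proof -
  have "fa_op (fa_smult c f) G t = (\<Sum>w | f w \<noteq> 0. fa_smult c f w * word_op w G t)"
    using assms unfolding finite_support_def by (rule fa_op_superset) (auto simp: fa_smult_def)
  then show ?thesis by (simp add: fa_smult_def fa_op_def sum_distrib_left mult.assoc)
qed

lemma fa_mult_g_g: "fa_mult (g x) (g y) = fa_mono [x, y]"
  by (simp add: g_def fa_mono_mult)

lemma fa_pow_g: "fa_pow (g x) m = fa_mono (replicate m x)"
  by (induction m) (simp_all add: fa_one_def g_def fa_mono_mult)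

lemmas fa_op_simps = fa_op_add fa_op_sub fa_op_smult fa_op_mono finite_support_mono
  finite_support_add finite_support_sub finite_support_smult fa_mult_g_g fa_pow_g fa_one_def

context
  fixes a b assumes a: "a \<in> {1..n}" and b: "b \<in> {1..n}"
begin

lemma sites_pos: "1 \<le> a" "1 \<le> b"
  using a b by auto

lemma op_omega_comm:
  "letter_op (Om a) (letter_op (Om b) G) t - letter_op (Om b) (letter_op (Om a) G) t = 0"
  using letter_op_swap[of "Om a" "Om b" G t] sites_pos by (cases "a = b") auto

lemma op_omega_omega_inv:
  "range_supported G \<Longrightarrow> letter_op (Om a) (letter_op (OmInv a) G) t - G t = 0"
  using letter_op_same_site[of "Om a" a "OmInv a" G t]
    site_op_omega_omega_inv[of "t a" "\<lambda>s. G (t(a := s))"]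
    site_op_out_of_range[of "t a" KW] range_supportedD[OF a, of G t]
  by (cases "snd (t a) < 2 * k") (auto simp: letter_sign_def)

lemma op_omega_inv_omega:
  "range_supported G \<Longrightarrow> letter_op (OmInv a) (letter_op (Om a) G) t - G t = 0"
  using letter_op_same_site[of "OmInv a" a "Om a" G t]
    site_op_omega_inv_omega[of "t a" "\<lambda>s. G (t(a := s))"]
    site_op_out_of_range[of "t a" KV] range_supportedD[OF a, of G t]
  by (cases "snd (t a) < 2 * k") (auto simp: letter_sign_def)

lemma op_omega_psi:
  "letter_op (Om a) (letter_op (Psi b) G) t -
     (if a = b then q else 1) * letter_op (Psi b) (letter_op (Om a) G) t = 0"
proof (cases "a = b")
  case True
  then show ?thesis
    using letter_op_same_site[of "Om a" a "Psi a" G t] letter_op_same_site[of "Psi a" a "Om a" G t]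
      site_op_omega_psi[of "\<lambda>s. G (t(a := s))" "t a"]
    by (simp add: letter_sign_def)
qed (use letter_op_swap[of "Om a" "Psi b" G t] sites_pos in auto)

lemma op_omega_psi_star:
  "letter_op (Om a) (letter_op (PsiS b) G) t -
     (if a = b then inverse q else 1) * letter_op (PsiS b) (letter_op (Om a) G) t = 0"
proof (cases "a = b")
  case True
  then show ?thesis
    using letter_op_same_site[of "Om a" a "PsiS a" G t]
      letter_op_same_site[of "PsiS a" a "Om a" G t]
      site_op_omega_psi_star[of "\<lambda>s. G (t(a := s))" "t a"]
    by (simp add: letter_sign_def)
qed (use letter_op_swap[of "Om a" "PsiS b" G t] sites_pos in auto)

lemma op_psi_anticomm:
  "letter_op (Psi a) (letter_op (Psi b) G) t + letter_op (Psi b) (letter_op (Psi a) G) t = 0"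
proof (cases "a = b")
  case True
  then show ?thesis
    using letter_op_same_site[of "Psi a" a "Psi a" G t]
      site_op_psi_psi[of "\<lambda>s. G (t(a := s))" "t a"]
    by simp
qed (use letter_op_swap[of "Psi a" "Psi b" G t] sites_pos in auto)

lemma op_psi_star_anticomm:
  "letter_op (PsiS a) (letter_op (PsiS b) G) t + letter_op (PsiS b) (letter_op (PsiS a) G) t = 0"
proof (cases "a = b")
  case True
  then show ?thesis
    using letter_op_same_site[of "PsiS a" a "PsiS a" G t]
      site_op_psi_star_psi_star[of "\<lambda>s. G (t(a := s))" "t a"]
    by simp
qed (use letter_op_swap[of "PsiS a" "PsiS b" G t] sites_pos in auto)

lemma op_psi_psi_star_anticomm:
  "a \<noteq> b \<Longrightarrow>
    letter_op (Psi a) (letter_op (PsiS b) G) t + letter_op (PsiS b) (letter_op (Psi a) G) t = 0"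
  using letter_op_swap[of "Psi a" "PsiS b" G t] sites_pos by auto

lemma letter_sign_psi_psi_star:
  "letter_sign (Psi a) t * letter_sign (PsiS a) t = (1::'k)"
  "letter_sign (PsiS a) t * letter_sign (Psi a) t = (1::'k)"
  by (simp_all add: letter_sign_def koszul_sign_square)

lemma op_psi_psi_star_omega_inv:
  "letter_op (Psi a) (letter_op (PsiS a) G) t + q ^ k * letter_op (PsiS a) (letter_op (Psi a) G) t -
     word_op (replicate k (OmInv a)) G t = 0"
  using letter_op_same_site[of "Psi a" a "PsiS a" G t]
    letter_op_same_site[of "PsiS a" a "Psi a" G t]
    site_op_psi_psi_star_omega_inv[of "\<lambda>s. G (t(a := s))" "t a"] letter_sign_psi_psi_star
    word_op_replicate_even[of "OmInv a" a k G t "t a"]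
  by simp

lemma op_psi_psi_star_omega:
  "letter_op (Psi a) (letter_op (PsiS a) G) t +
     inverse (q ^ k) * letter_op (PsiS a) (letter_op (Psi a) G) t -
     word_op (replicate k (Om a)) G t = 0"
  using letter_op_same_site[of "Psi a" a "PsiS a" G t]
    letter_op_same_site[of "PsiS a" a "Psi a" G t]
    site_op_psi_psi_star_omega[of "\<lambda>s. G (t(a := s))" "t a"] letter_sign_psi_psi_star
    word_op_replicate_even[of "Om a" a k G t "t a"]
  by simp

end

definition acts_as_zero :: "(cgen list \<Rightarrow> 'k) \<Rightarrow> bool" where
  "acts_as_zero f \<longleftrightarrow> finite_support f \<and> (\<forall>G t. range_supported G \<longrightarrow> fa_op f G t = 0)"

lemma relation_acts_as_zero:
  assumes "r \<in> cl_relations n k q"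
  shows "acts_as_zero r"
  using assms unfolding cl_relations_def
proof (elim UN_E, goal_cases)
  case (1 a b)
  then have a: "a \<in> {1..n}" and b: "b \<in> {1..n}" by blast+
  from 1 show ?case
    using op_omega_comm[OF a b] op_omega_omega_inv[OF a b] op_omega_inv_omega[OF a b]
      op_omega_psi[OF a b] op_omega_psi_star[OF a b] op_psi_anticomm[OF a b]
      op_psi_star_anticomm[OF a b] op_psi_psi_star_omega_inv[OF a b] op_psi_psi_star_omega[OF a b]
      op_psi_psi_star_anticomm[OF a b]
    by (auto simp: acts_as_zero_def fa_op_simps split: if_splits)
qed

lemma fa_mult_mono_mono:
  "fa_mult (fa_mult (fa_mono u) f) (fa_mono w) x =
     (if \<exists>y. x = u @ y @ w then f (drop (length u) (take (length x - length w) x)) else 0)"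
proof (cases "\<exists>y. x = u @ y @ w")
  case True
  then obtain y where x: "x = u @ y @ w" by blast
  show ?thesis using x by (simp add: fa_mult_mono_right fa_mult_mono_left)
next
  case False
  have "fa_mult (fa_mult (fa_mono u) f) (fa_mono w) x = 0"
  proof (rule ccontr)
    assume nz: "fa_mult (fa_mult (fa_mono u) f) (fa_mono w) x \<noteq> 0"
    let ?m = "take (length x - length w) x"
    have "drop (length x - length w) x = w"
      using nz by (auto simp: fa_mult_mono_right split: if_splits)
    then have e1: "x = ?m @ w" by (metis append_take_drop_id)
    have "take (length u) ?m = u"
      using nz by (auto simp: fa_mult_mono_right fa_mult_mono_left split: if_splits)
    then have e2: "?m = u @ drop (length u) ?m" by (metis append_take_drop_id)
    from e1 e2 have "x = u @ drop (length u) ?m @ w" by (metis append_assoc)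
    then show False using False by blast
  qed
  then show ?thesis using False by simp
qed

lemma fa_mult_mono_mono_at: "fa_mult (fa_mult (fa_mono u) f) (fa_mono w) (u @ y @ w) = f y"
  by (subst fa_mult_mono_mono) auto

lemma fa_mult_mono_mono_support:
  "{x. fa_mult (fa_mult (fa_mono u) f) (fa_mono w) x \<noteq> 0} \<subseteq> (\<lambda>y. u @ y @ w) ` {y. f y \<noteq> 0}"
proof
  fix x assume "x \<in> {x. fa_mult (fa_mult (fa_mono u) f) (fa_mono w) x \<noteq> 0}"
  then have nz: "fa_mult (fa_mult (fa_mono u) f) (fa_mono w) x \<noteq> 0" by simp
  then obtain y where x: "x = u @ y @ w" by (subst (asm) fa_mult_mono_mono) (auto split: if_splits)
  have "f y \<noteq> 0" using nz unfolding x fa_mult_mono_mono_at by simp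
  then show "x \<in> (\<lambda>y. u @ y @ w) ` {y. f y \<noteq> 0}" using x by blast
qed

lemma acts_as_zero_mono_mult:
  assumes "acts_as_zero f"
  shows "acts_as_zero (fa_mult (fa_mult (fa_mono u) f) (fa_mono w))"
  unfolding acts_as_zero_def
proof
  let ?h = "fa_mult (fa_mult (fa_mono u) f) (fa_mono w)"
  let ?S = "{y. f y \<noteq> 0}"
  have fin: "finite ((\<lambda>y. u @ y @ w) ` ?S)"
    using assms by (simp add: acts_as_zero_def finite_support_def)
  then show "finite_support ?h"
    unfolding finite_support_def by (rule finite_subset[OF fa_mult_mono_mono_support])
  show "\<forall>G t. range_supported G \<longrightarrow> fa_op ?h G t = 0"
  proof (intro allI impI)
    fix G t assume G: "range_supported G"
    have inj: "inj_on (\<lambda>y. u @ y @ w) ?S" by (auto simp: inj_on_def)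
    have "fa_op ?h G t = (\<Sum>x\<in>(\<lambda>y. u @ y @ w) ` ?S. ?h x * word_op x G t)"
      by (rule fa_op_superset[OF fin fa_mult_mono_mono_support])
    also have "\<dots> = (\<Sum>y\<in>?S. f y * word_op u (word_op y (word_op w G)) t)"
      by (simp add: sum.reindex[OF inj] fa_mult_mono_mono_at word_op_append)
    also have "\<dots> = word_op u (fa_op f (word_op w G)) t"
      by (simp add: fa_op_def word_op_sum word_op_scale)
    also have "fa_op f (word_op w G) = (\<lambda>_. 0)"
      using assms range_supported_word_op[OF G] unfolding acts_as_zero_def by auto
    finally show "fa_op ?h G t = 0" by (simp add: word_op_zero)
  qed
qed

lemma ideal_acts_as_zero: "f \<in> two_sided_ideal L (cl_relations n k q) \<Longrightarrow> acts_as_zero f"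
proof (induction rule: two_sided_ideal.induct)
  case (gen r)
  then show ?case by (rule relation_acts_as_zero)
next
  case zero
  then show ?case by (simp add: acts_as_zero_def finite_support_def fa_op_def)
next
  case (add f1 f2)
  then show ?case by (simp add: acts_as_zero_def finite_support_add fa_op_add)
next
  case (smult f1 c)
  then show ?case by (simp add: acts_as_zero_def finite_support_smult fa_op_smult)
next
  case (mult f1 u w)
  then show ?case by (blast intro: acts_as_zero_mono_mult)
qed

end

section \<open>Linear independence\<close>

context quantum_clifford
begin

definition site_vacuum :: "site_label \<times> nat \<Rightarrow> 'k" where
  "site_vacuum s = (if snd s = 0 \<and> (fst s = cE \<or> fst s = cF) then 1 else 0)"

definition tensor :: "(nat \<Rightarrow> site_label \<times> nat \<Rightarrow> 'k) \<Rightarrow> state \<Rightarrow> 'k" where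
  "tensor h t = (\<Prod>a\<in>{1..n}. h a (t a))"

definition even_fn :: "(site_label \<times> nat \<Rightarrow> 'k) \<Rightarrow> bool" where
  "even_fn h1 \<longleftrightarrow> (\<forall>s. odd_label (fst s) \<longrightarrow> h1 s = 0)"

lemma even_fn_site_vacuum: "even_fn site_vacuum"
  by (auto simp: even_fn_def site_vacuum_def odd_label_def)

lemma tensor_split: "a \<in> {1..n} \<Longrightarrow> tensor h t = h a (t a) * (\<Prod>b\<in>{1..n} - {a}. h b (t b))"
  unfolding tensor_def by (rule prod.remove) simp_all

lemma koszul_sign_tensor:
  assumes a: "a \<in> {1..n}" and even: "\<forall>b\<in>{1..<a}. even_fn (h b)"
    and nz: "(\<Prod>b\<in>{1..n} - {a}. h b (t b)) \<noteq> 0"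
  shows "koszul_sign a t = (1::'k)"
proof -
  have "\<not> odd_label (fst (t b))" if b: "b \<in> {1..<a}" for b
  proof
    assume "odd_label (fst (t b))"
    then have "h b (t b) = 0" using even b unfolding even_fn_def by blast
    moreover have "b \<in> {1..n} - {a}" using b a by auto
    ultimately show False using nz by (simp add: prod_zero_iff)
  qed
  then have "{b\<in>{1..<a}. odd_label (fst (t b))} = {}" by blast
  then show ?thesis unfolding koszul_sign_def by (simp only: card.empty power_0)
qed

text \<open>On product functions whose factors before site \<open>a\<close> are even, the Koszul sign of
  a letter at site \<open>a\<close> is trivial, so the letter acts on the \<open>a\<close>-th factor alone.\<close>
lemma letter_op_tensor:
  assumes a: "site x = a" "a \<in> {1..n}" and even: "\<forall>b\<in>{1..<a}. even_fn (h b)"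
  shows "letter_op x (tensor h) = tensor (h(a := site_op (kind x) (h a)))"
proof
  fix t
  let ?s = "site_source (kind x) (t a)"
  let ?R = "\<Prod>b\<in>{1..n} - {a}. h b (t b)"
  have others: "(\<Prod>b\<in>{1..n} - {a}. h' b (t' b)) = ?R" if "\<forall>b. b \<noteq> a \<longrightarrow> h' b = h b \<and> t' b = t b"
    for h' t' using that by (intro prod.cong) auto
  have L: "letter_op x (tensor h) t = letter_sign x t * (site_coeff (kind x) (t a) * h a ?s * ?R)"
    using tensor_split[OF a(2), of h "t(a := ?s)"] others[of h "t(a := ?s)"]
    by (simp add: letter_op_def a(1) mult.assoc)
  have R: "tensor (h(a := site_op (kind x) (h a))) t = site_coeff (kind x) (t a) * h a ?s * ?R"
    using tensor_split[OF a(2), of "h(a := site_op (kind x) (h a))" t]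
      others[of "h(a := site_op (kind x) (h a))" t]
    by (simp add: site_op_def)
  show "letter_op x (tensor h) t = tensor (h(a := site_op (kind x) (h a))) t"
  proof (cases "?R = 0")
    case False
    then have "koszul_sign a t = (1::'k)" by (rule koszul_sign_tensor[OF a(2) even])
    then have "letter_sign x t = (1::'k)" by (simp add: letter_sign_def a(1))
    then show ?thesis unfolding L R by simp
  qed (simp add: L R)
qed

lemma word_op_replicate_tensor:
  assumes a: "site x = a" "a \<in> {1..n}" and even: "\<forall>b\<in>{1..<a}. even_fn (h b)"
  shows "word_op (replicate m x) (tensor h) = tensor (h(a := (site_op (kind x) ^^ m) (h a)))"
proof (induction m)
  case (Suc m)
  have "\<forall>b\<in>{1..<a}. even_fn ((h(a := (site_op (kind x) ^^ m) (h a))) b)"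
    using even by auto
  then have step: "letter_op x (tensor (h(a := (site_op (kind x) ^^ m) (h a)))) =
      tensor (h(a := (site_op (kind x) ^^ Suc m) (h a)))"
    using letter_op_tensor[OF a] by simp
  have "word_op (replicate (Suc m) x) (tensor h) = letter_op x (word_op (replicate m x) (tensor h))"
    by simp
  also have "\<dots> = tensor (h(a := (site_op (kind x) ^^ Suc m) (h a)))"
    by (simp only: Suc step)
  finally show ?case .
qed simp

definition site_image :: "nat \<Rightarrow> nat \<Rightarrow> nat \<Rightarrow> site_label \<times> nat \<Rightarrow> 'k" where
  "site_image p d v = (site_op KP ^^ p) ((site_op KS ^^ d) ((site_op KW ^^ v) site_vacuum))"

lemma word_op_site_word_tensor:
  assumes a: "a \<in> {1..n}" and even: "\<forall>b\<in>{1..<a}. even_fn (h b)"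
  shows "word_op (site_word a p d v) (tensor h)
      = tensor (h(a := (site_op KP ^^ p) ((site_op KS ^^ d) ((site_op KW ^^ v) (h a)))))"
proof -
  have ev1: "\<forall>b\<in>{1..<a}. even_fn ((h(a := (site_op KW ^^ v) (h a))) b)" using even by auto
  have ev2: "\<forall>b\<in>{1..<a}. even_fn ((h(a := (site_op KS ^^ d) ((site_op KW ^^ v) (h a)))) b)"
    using even by auto
  show ?thesis
    unfolding site_word_def word_op_append
    using word_op_replicate_tensor[of "Om a" a h v] word_op_replicate_tensor[of "PsiS a" a _ d]
      word_op_replicate_tensor[of "Psi a" a _ p] a even ev1 ev2
    by simp
qed

definition vacuum :: "state \<Rightarrow> 'k" where "vacuum = tensor (\<lambda>_. site_vacuum)"

lemma word_op_suffix_vacuum: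
  assumes j: "1 \<le> j" "j \<le> Suc n"
  shows "word_op (concat (map (\<lambda>b. site_word b (p b) (d b) (v b)) [j..<Suc n])) vacuum =
    tensor (\<lambda>b. if j \<le> b then site_image (p b) (d b) (v b) else site_vacuum)"
  using j(2)
proof (induction j rule: inc_induct)
  case base
  show ?case unfolding vacuum_def tensor_def by (intro ext prod.cong) auto
next
  case (step m)
  have m: "m \<in> {1..n}" using step j by auto
  let ?h = "\<lambda>b. if Suc m \<le> b then site_image (p b) (d b) (v b) else site_vacuum"
  have even: "\<forall>b\<in>{1..<m}. even_fn (?h b)" using even_fn_site_vacuum by auto
  have "[m..<Suc n] = m # [Suc m..<Suc n]" using step by (simp add: upt_conv_Cons)
  then have "word_op (concat (map (\<lambda>b. site_word b (p b) (d b) (v b)) [m..<Suc n])) vacuum =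
      word_op (site_word m (p m) (d m) (v m)) (tensor ?h)"
    using step.IH by (simp add: word_op_append)
  also have "\<dots> = tensor (?h(m := site_image (p m) (d m) (v m)))"
    using word_op_site_word_tensor[OF m even] by (simp add: site_image_def)
  also have "?h(m := site_image (p m) (d m) (v m))
      = (\<lambda>b. if m \<le> b then site_image (p b) (d b) (v b) else site_vacuum)"
    by (auto simp: fun_eq_iff)
  finally show ?case .
qed

lemma word_op_monomial_vacuum:
  "word_op (cl_monomial_word n p d v) vacuum = tensor (\<lambda>b. site_image (p b) (d b) (v b))"
proof -
  have "word_op (cl_monomial_word n p d v) vacuum
      = tensor (\<lambda>b. if 1 \<le> b then site_image (p b) (d b) (v b) else site_vacuum)"
    unfolding cl_monomial_word_site_words by (rule word_op_suffix_vacuum) auto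
  also have "\<dots> = tensor (\<lambda>b. site_image (p b) (d b) (v b))"
    unfolding tensor_def by (intro ext prod.cong) auto
  finally show ?thesis .
qed

lemma range_supported_vacuum: "range_supported vacuum"
  unfolding range_supported_def
proof (intro allI impI)
  fix t assume "\<not> in_range t"
  then obtain a where a: "a \<in> {1..n}" "\<not> snd (t a) < 2 * k" unfolding in_range_def by blast
  then have "site_vacuum (t a) = 0" using k_pos by (simp add: site_vacuum_def)
  then show "vacuum t = 0" unfolding vacuum_def tensor_def using a by (intro prod_zero) auto
qed

end

lemma count_list_replicate: "count_list (replicate m y) x = (if y = x then m else 0)"
  by (induction m) auto

lemma count_list_concat: "count_list (concat xs) x = sum_list (map (\<lambda>l. count_list l x) xs)"
  by (induction xs) auto

lemma count_site_word:
  "count_list (site_word b p d v) (Psi a) = (if b = a then p else 0)"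
  "count_list (site_word b p d v) (PsiS a) = (if b = a then d else 0)"
  "count_list (site_word b p d v) (Om a) = (if b = a then v else 0)"
  by (auto simp: site_word_def count_list_replicate)

lemma sum_list_upt_1: "sum_list (map f [1..<Suc n]) = (\<Sum>b\<in>{1..n}. f b)"
proof -
  have "set [1..<Suc n] = {1..n}" by auto
  then show ?thesis using sum_set_upt_conv_sum_list_nat[of f 1 "Suc n"] by simp
qed

lemmas sum_list_upt_1' = sum_list_upt_1[unfolded One_nat_def]

lemma count_cl_monomial_word:
  assumes a: "a \<in> {1..n}"
  shows "count_list (cl_monomial_word n p d v) (Psi a) = p a"
    "count_list (cl_monomial_word n p d v) (PsiS a) = d a"
    "count_list (cl_monomial_word n p d v) (Om a) = v a"
  using a by (simp_all add: cl_monomial_word_site_words count_list_concat comp_def count_site_word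
    sum_list_upt_1 sum_list_upt_1' sum.delta' del: upt_Suc)

definition psi_count :: "cgen list \<Rightarrow> nat \<Rightarrow> nat" where "psi_count w a = count_list w (Psi a)"
definition psi_star_count :: "cgen list \<Rightarrow> nat \<Rightarrow> nat"
  where "psi_star_count w a = count_list w (PsiS a)"
definition omega_count :: "cgen list \<Rightarrow> nat \<Rightarrow> nat" where "omega_count w a = count_list w (Om a)"

lemma cl_monomial_word_cong:
  assumes "\<forall>b\<in>{1..n}. p b = p' b \<and> d b = d' b \<and> v b = v' b"
  shows "cl_monomial_word n p d v = cl_monomial_word n p' d' v'"
  unfolding cl_monomial_word_site_words
    using assms by (intro arg_cong[where f = concat] map_cong) auto

context quantum_clifford
begin

lemma basis_word_counts:
  assumes "w \<in> BW"
  shows "w = cl_monomial_word n (psi_count w) (psi_star_count w) (omega_count w)"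
    "\<forall>b\<in>{1..n}. psi_count w b \<le> 1 \<and> psi_star_count w b \<le> 1 \<and> omega_count w b < 2 * k"
proof -
  obtain p d v where w: "w = cl_monomial_word n p d v"
    and val: "\<forall>b\<in>{1..n}. p b \<in> {0, 1} \<and> d b \<in> {0, 1} \<and> v b \<in> {0..<2*k}"
    using assms unfolding cl_basis_words_def by blast
  have c: "\<forall>b\<in>{1..n}. psi_count w b = p b \<and> psi_star_count w b = d b \<and> omega_count w b = v b"
    using count_cl_monomial_word w by (simp add: psi_count_def psi_star_count_def omega_count_def)
  show "w = cl_monomial_word n (psi_count w) (psi_star_count w) (omega_count w)"
    using w cl_monomial_word_cong[of n p "psi_count w" d "psi_star_count w" v "omega_count w"] c
      by simp
  show "\<forall>b\<in>{1..n}. psi_count w b \<le> 1 \<and> psi_star_count w b \<le> 1 \<and> omega_count w b < 2 * k"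
    using c val by fastforce
qed

lemma site_omega_power_vacuum:
  assumes v: "v < 2 * k"
  shows "(site_op KW ^^ v) site_vacuum =
    (\<lambda>s. if snd s = v \<and> (fst s = cE \<or> fst s = cF) then 1 else 0)"
proof
  fix s :: "site_label \<times> nat"
  obtain c u where s: "s = (c, u)" by (cases s)
  show "(site_op KW ^^ v) site_vacuum s = (if snd s = v \<and> (fst s = cE \<or> fst s = cF) then 1 else 0)"
  proof (cases "u < 2 * k")
    case True
    have m: "((u + 2 * k - v) mod (2 * k) = 0) = (u = v)"
    proof
      assume "(u + 2 * k - v) mod (2 * k) = 0"
      then show "u = v" using True v
        by (cases "v \<le> u") (auto simp: mod_if split: if_splits)
    qed simp
    show ?thesis unfolding s using site_op_omega_power[OF v True, of site_vacuum c] m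
      by (cases c) (auto simp: site_vacuum_def omega_weight_def)
  next
    case False
    then show ?thesis unfolding s using v site_op_power_out_of_range[of v "(c, u)"] k_pos
      by (cases "v = 0") (auto simp: site_vacuum_def)
  qed
qed

definition site_witness :: "nat \<Rightarrow> nat \<Rightarrow> nat \<Rightarrow> site_label \<times> nat" where
  "site_witness p d v =
     (if p = 0 then (if d = 0 then (cF, v) else (cS, v))
      else (if d = 0 then (cP, v) else (cE, shift_k v)))"

lemma site_image_values:
  assumes v: "v < 2 * k"
  shows "site_image 0 0 v = (\<lambda>s. if snd s = v \<and> (fst s = cE \<or> fst s = cF) then 1 else 0)"
    "site_image 0 1 v = (\<lambda>s. if s = (cS, v) then 1 else 0)"
    "site_image 1 0 v = (\<lambda>s. if s = (cP, v) then 1 else 0)"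
    "site_image 1 1 v = (\<lambda>s. if s = (cE, shift_k v) then 1 else 0)"
proof -
  show g0: "site_image 0 0 v = (\<lambda>s. if snd s = v \<and> (fst s = cE \<or> fst s = cF) then 1 else 0)"
    by (simp add: site_image_def site_omega_power_vacuum[OF v])
  show g1: "site_image 0 1 v = (\<lambda>s. if s = (cS, v) then 1 else 0)"
  proof
    fix s :: "site_label \<times> nat"
    obtain c u where s: "s = (c, u)" by (cases s)
    show "site_image 0 1 v s = (if s = (cS, v) then 1 else 0)"
      unfolding s using v
        by (cases c) (auto simp: site_image_def site_omega_power_vacuum site_op_def)
  qed
  show "site_image 1 0 v = (\<lambda>s. if s = (cP, v) then 1 else 0)"
  proof
    fix s :: "site_label \<times> nat"
    obtain c u where s: "s = (c, u)" by (cases s)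
    show "site_image 1 0 v s = (if s = (cP, v) then 1 else 0)"
      unfolding s using v
        by (cases c) (auto simp: site_image_def site_omega_power_vacuum site_op_def)
  qed
  show "site_image 1 1 v = (\<lambda>s. if s = (cE, shift_k v) then 1 else 0)"
  proof
    fix s :: "site_label \<times> nat"
    obtain c u where s: "s = (c, u)" by (cases s)
    have g1': "site_op KS ((site_op KW ^^ v) site_vacuum) = (\<lambda>s. if s = (cS, v) then 1 else 0)"
      using g1 by (simp add: site_image_def)
    have e: "u < 2 * k \<Longrightarrow> (shift_k u = v) = (u = shift_k v)"
      using shift_k_shift_k v shift_k_lt by metis
    show "site_image 1 1 v s = (if s = (cE, shift_k v) then 1 else 0)"
      using g1' v shift_k_lt e unfolding s
      by (cases c) (auto simp: site_op_def site_image_def)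
  qed
qed

lemmas site_image_values' = site_image_values[unfolded One_nat_def]

lemma site_image_witness:
  "p \<le> 1 \<Longrightarrow> d \<le> 1 \<Longrightarrow> v < 2 * k \<Longrightarrow> site_image p d v (site_witness p d v) = 1"
  by (cases "p = 0"; cases "d = 0")
    (auto simp: site_image_values site_image_values' site_witness_def le_Suc_eq)

lemma site_image_witness_nonzero:
  assumes "p \<le> 1" "d \<le> 1" "v < 2 * k" "p' \<le> 1" "d' \<le> 1" "v' < 2 * k"
    and "site_image p d v (site_witness p' d' v') \<noteq> 0"
  shows "(p = p' \<and> d = d' \<and> v = v') \<or> (p' = 1 \<and> d' = 1 \<and> p = 0 \<and> d = 0)"
proof -
  have p: "p = 0 \<or> p = 1" "d = 0 \<or> d = 1" "p' = 0 \<or> p' = 1" "d' = 0 \<or> d' = 1" using assms by auto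
  have inj: "shift_k v = shift_k v' \<Longrightarrow> v = v'" using shift_k_shift_k assms(3,6) by metis
  show ?thesis using p assms(7) inj
    by (auto simp: site_image_values site_image_values' assms(3,6) site_witness_def
        split: if_splits)
qed

end

context quantum_clifford
begin

definition basis_image :: "cgen list \<Rightarrow> state \<Rightarrow> 'k" where
  "basis_image w = tensor (\<lambda>b. site_image (psi_count w b) (psi_star_count w b) (omega_count w b))"

definition witness :: "cgen list \<Rightarrow> state" where
  "witness w = (\<lambda>b. site_witness (psi_count w b) (psi_star_count w b) (omega_count w b))"

definition charged_sites :: "cgen list \<Rightarrow> nat set" where
  "charged_sites w = {b\<in>{1..n}. psi_count w b \<noteq> 0 \<or> psi_star_count w b \<noteq> 0}"

lemma word_op_basis_word_vacuum: "w \<in> BW \<Longrightarrow> word_op w vacuum = basis_image w"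
  using word_op_monomial_vacuum[of "psi_count w" "psi_star_count w" "omega_count w"]
    basis_word_counts(1)[of w]
  by (simp add: basis_image_def)

lemma basis_image_witness: "w \<in> BW \<Longrightarrow> basis_image w (witness w) = 1"
  unfolding basis_image_def tensor_def witness_def using basis_word_counts(2)[of w]
  by (intro prod.neutral) (auto intro!: site_image_witness)

lemma basis_word_eqI:
  assumes "w \<in> BW" "w' \<in> BW" and "\<forall>b\<in>{1..n}. psi_count w b = psi_count w' b \<and>
    psi_star_count w b = psi_star_count w' b \<and> omega_count w b = omega_count w' b"
  shows "w = w'"
  using basis_word_counts(1)[OF assms(1)] basis_word_counts(1)[OF assms(2)]
    cl_monomial_word_cong[OF assms(3)] by simp

lemma basis_image_witness_site:
  assumes w: "w \<in> BW" and w': "w' \<in> BW" and nz: "basis_image w (witness w') \<noteq> 0"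
    and b: "b \<in> {1..n}"
  shows "(psi_count w b = psi_count w' b \<and> psi_star_count w b = psi_star_count w' b \<and>
      omega_count w b = omega_count w' b) \<or> (b \<in> charged_sites w' \<and> b \<notin> charged_sites w)"
proof -
  have "psi_count w b \<le> 1 \<and> psi_star_count w b \<le> 1 \<and> omega_count w b < 2 * k"
    and "psi_count w' b \<le> 1 \<and> psi_star_count w' b \<le> 1 \<and> omega_count w' b < 2 * k"
    using basis_word_counts(2)[OF w] basis_word_counts(2)[OF w'] b by blast+
  moreover have "site_image (psi_count w b) (psi_star_count w b) (omega_count w b)
      (site_witness (psi_count w' b) (psi_star_count w' b) (omega_count w' b)) \<noteq> 0"
    using nz b unfolding basis_image_def tensor_def witness_def by auto
  ultimately have "(psi_count w b = psi_count w' b \<and> psi_star_count w b = psi_star_count w' b \<and>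
      omega_count w b = omega_count w' b) \<or>
      (psi_count w' b = 1 \<and> psi_star_count w' b = 1 \<and> psi_count w b = 0 \<and> psi_star_count w b = 0)"
    by (intro site_image_witness_nonzero) auto
  then show ?thesis using b unfolding charged_sites_def by auto
qed

lemma basis_image_triangular:
  assumes w: "w \<in> BW" and w': "w' \<in> BW" and ne: "w \<noteq> w'" and nz: "basis_image w (witness w') \<noteq> 0"
  shows "card (charged_sites w) < card (charged_sites w')"
proof -
  note site = basis_image_witness_site[OF w w' nz]
  have sub: "charged_sites w \<subseteq> charged_sites w'"
  proof
    fix b assume b: "b \<in> charged_sites w"
    then have "b \<in> {1..n}" by (simp add: charged_sites_def)
    from site[OF this] b show "b \<in> charged_sites w'" by (auto simp: charged_sites_def)
  qed
  obtain b where b: "b \<in> {1..n}" "\<not> (psi_count w b = psi_count w' b \<and>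
      psi_star_count w b = psi_star_count w' b \<and> omega_count w b = omega_count w' b)"
    using basis_word_eqI[OF w w'] ne by blast
  then have "b \<in> charged_sites w' - charged_sites w" using site[OF b(1)] by blast
  then have "charged_sites w \<subset> charged_sites w'" using sub by blast
  moreover have "finite (charged_sites w')" unfolding charged_sites_def by simp
  ultimately show ?thesis by (rule psubset_card_mono[rotated])
qed

lemma fa_mono_sum_apply:
  "finite S \<Longrightarrow> (\<Sum>w\<in>S. c w * fa_mono w u) = (if u \<in> S then c u else (0::'k))"
  by (simp add: fa_mono_def if_distrib sum.delta' cong: if_cong)

lemma ideal_basis_images_vanish:
  assumes S: "finite S" "S \<subseteq> BW" and I: "(\<lambda>u. \<Sum>w\<in>S. c w * fa_mono w u) \<in> cl_ideal n k q"
  shows "(\<Sum>w\<in>S. c w * basis_image w t) = 0"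
proof -
  let ?f = "\<lambda>u. \<Sum>w\<in>S. c w * fa_mono w u"
  have "fa_op ?f vacuum t = (\<Sum>w\<in>S. ?f w * word_op w vacuum t)"
    by (rule fa_op_superset[OF S(1)]) (use fa_mono_sum_apply[OF S(1)] in auto)
  also have "\<dots> = (\<Sum>w\<in>S. c w * basis_image w t)"
    using S by (intro sum.cong refl) (auto simp: fa_mono_sum_apply word_op_basis_word_vacuum)
  finally show ?thesis
    using ideal_acts_as_zero I range_supported_vacuum
      unfolding cl_ideal_def acts_as_zero_def by auto
qed

lemma basis_images_independent:
  assumes S: "finite S" "S \<subseteq> BW" and zero: "\<And>t. (\<Sum>w\<in>S. c w * basis_image w t) = 0"
  shows "w0 \<in> S \<Longrightarrow> c w0 = 0"
proof (induction "card (charged_sites w0)" arbitrary: w0 rule: less_induct)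
  case less
  have "c w * basis_image w (witness w0) = 0" if w: "w \<in> S - {w0}" for w
  proof (cases "basis_image w (witness w0) = 0")
    case False
    then have "card (charged_sites w) < card (charged_sites w0)"
      using basis_image_triangular[of w w0] w less.prems S(2) by auto
    then show ?thesis using less.hyps w by simp
  qed simp
  then have rest: "(\<Sum>w\<in>S - {w0}. c w * basis_image w (witness w0)) = 0"
    by (intro sum.neutral) blast
  have "0 = (\<Sum>w\<in>S. c w * basis_image w (witness w0))" using zero by simp
  also have "\<dots>
      = c w0 * basis_image w0 (witness w0) + (\<Sum>w\<in>S - {w0}. c w * basis_image w (witness w0))"
    by (rule sum.remove[OF S(1) less.prems])
  also have "basis_image w0 (witness w0) = 1" using basis_image_witness less.prems S(2) by auto
  finally show "c w0 = 0" using rest by simp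
qed

theorem independence:
  assumes "finite S" "S \<subseteq> BW" and "(\<lambda>u. \<Sum>w\<in>S. c w * fa_mono w u) \<in> cl_ideal n k q"
  shows "\<forall>w\<in>S. c w = 0"
  using basis_images_independent[OF assms(1,2) ideal_basis_images_vanish[OF assms]] by blast

end

theorem theorem3p4:
  fixes q :: "'k::field" and n k :: nat
  assumes "(2::'k) \<noteq> 0" and "q \<noteq> 0" and "0 < n" and "0 < k"
  shows "(\<forall>f \<in> free_alg (cl_letters n).
            \<exists>S c. finite S \<and> S \<subseteq> cl_basis_words n k \<and>
              fa_sub f (\<lambda>u. \<Sum>w\<in>S. c w * fa_mono w u) \<in> cl_ideal n k q)
       \<and> (\<forall>S c. finite S \<and> S \<subseteq> cl_basis_words n k \<and>
              (\<lambda>u. \<Sum>w\<in>S. c w * fa_mono w u) \<in> cl_ideal n k q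
              \<longrightarrow> (\<forall>w\<in>S. c w = (0::'k)))"
proof -
  interpret quantum_clifford n k q
    using assms by unfold_locales auto
  show ?thesis using spanning independence by blast
qed

end
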